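(* Let $K\subseteq\mathbb{R}^{p}$ be compact, $S_0$ a set of covariate values, $\sigma>0$, and $r(x,\beta)$ a function such that for every $x$, $\beta\mapsto r(x,\beta)$ is a polynomial of degree at most $\zeta$ (an integer $\ge1$). Assume $\mathfrak{L}_{S_0}:=\sup_{x\in S_0}\mathfrak{L}(x)$ is finite and positive. Then there is a constant $C_p$ depending only on $p$ such that for every $0<\eta<e^{-1}\sigma^{-1}$, $$\log N(\eta,\mathcal{M}_K,\|\cdot\|_{\infty,S_0\times\mathbb{R}})\le C_p\,\zeta^p\,N\Big(\frac{\sigma}{\mathfrak{L}_{S_0}}\sqrt{2\log\frac{3}{\sigma\eta}},\,K\Big)\Big(\log\frac{1}{\sigma\eta}\Big)^{p+1}.$$
   Context: $\phi$ is the standard normal density; for a probability measure $G$ on $\mathbb{R}^p$, $f^G_x(y):=\int\frac1\sigma\phi\big(\frac{y-r(x,\beta)}{\sigma}\big)\,dG(\beta)$. $\mathcal{M}_K:=\{(x,y)\mapsto f^G_x(y): G\text{ a probability measure supported on }K\}$. $\|\cdot\|_{\infty,S_0\times\mathbb{R}}$ is the pseudometric $(f^G,f^{G'})\mapsto\sup_{x\in S_0,y\in\mathbb{R}}|f^G_x(y)-f^{G'}_x(y)|$. $\mathfrak{L}(x):=\sup_{\beta_1,\beta_2\in K,\beta_1\ne\beta_2}\frac{|r(x,\beta_1)-r(x,\beta_2)|}{\|\beta_1-\beta_2\|}$. For a metric (pseudometric) $\mathfrak{d}$, $N(\eta,T,\mathfrak{d})$ is the smallest cardinality of a set $S$ with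 $\sup_{t\in T}\inf_{s\in S}\mathfrak{d}(s,t)\le\eta$; $N(\eta,T)$ denotes this for the Euclidean metric. *)

theory Defs
  imports "HOL-Probability.Probability"
begin

text \<open>Covering number N(eta, T, d): smallest cardinality of a set S (of points of the ambient
  type) with sup over t in T of inf over s in S of d(s,t) at most eta; infinity if no finite such S.\<close>
definition covering_number :: "('a \<Rightarrow> 'a \<Rightarrow> ereal) \<Rightarrow> real \<Rightarrow> 'a set \<Rightarrow> ereal" where
  "covering_number d eta T =
     (INF S \<in> {S. finite S \<and> (\<forall>t\<in>T. \<exists>s\<in>S. d s t \<le> ereal eta)}. ereal (real (card S)))"

text \<open>Sup pseudometric over S0 x R (values in ereal so that unbounded differences give infinity).\<close>
definition sup_dist :: "'x set \<Rightarrow> ('x \<Rightarrow> real \<Rightarrow> real) \<Rightarrow> ('x \<Rightarrow> real \<Rightarrow> real) \<Rightarrow> ereal" where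
  "sup_dist S0 f g = (SUP xy \<in> S0 \<times> (UNIV::real set). ereal \<bar>f (fst xy) (snd xy) - g (fst xy) (snd xy)\<bar>)"

definition mix_density :: "real \<Rightarrow> ('x \<Rightarrow> real^'p \<Rightarrow> real) \<Rightarrow> (real^'p) measure \<Rightarrow> 'x \<Rightarrow> real \<Rightarrow> real" where
  "mix_density \<sigma> r G x y = (\<integral>\<beta>. (1 / \<sigma>) * std_normal_density ((y - r x \<beta>) / \<sigma>) \<partial>G)"

definition mixture_class :: "real \<Rightarrow> ('x \<Rightarrow> real^'p \<Rightarrow> real) \<Rightarrow> (real^'p) set \<Rightarrow> ('x \<Rightarrow> real \<Rightarrow> real) set" where
  "mixture_class \<sigma> r K =
     {mix_density \<sigma> r G | G. prob_space G \<and> sets G = sets borel \<and> emeasure G K = 1}"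

definition lip_const :: "('x \<Rightarrow> real^'p \<Rightarrow> real) \<Rightarrow> (real^'p) set \<Rightarrow> 'x \<Rightarrow> ereal" where
  "lip_const r K x = (SUP b \<in> {(b1, b2). b1 \<in> K \<and> b2 \<in> K \<and> b1 \<noteq> b2}.
       ereal (\<bar>r x (fst b) - r x (snd b)\<bar> / norm (fst b - snd b)))"

definition poly_deg_le :: "nat \<Rightarrow> (real^'p \<Rightarrow> real) \<Rightarrow> bool" where
  "poly_deg_le d f \<longleftrightarrow> (\<exists>c :: ('p \<Rightarrow> nat) \<Rightarrow> real. \<forall>\<beta>.
      f \<beta> = (\<Sum>\<alpha> \<in> {\<alpha>. (\<Sum>i\<in>UNIV. \<alpha> i) \<le> d}. c \<alpha> * (\<Prod>i\<in>UNIV. (\<beta> $ i) ^ (\<alpha> i))))"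

end

theory Submission
  imports Defs
begin

(* Discretize the mixing measure on a fine grid of K; this moves the mixture by at most
   eta/4, since the Gaussian kernel is Lipschitz in beta.  Group the grid points around the
   centers of a minimal cover of K at scale sigma/L * sqrt (2 log (3/(sigma eta))).  Around
   one center the kernel is eta/8-close to a polynomial in beta of degree
   O(zeta log (1/(sigma eta))) (zero in the Gaussian tail, a Taylor polynomial of exp
   otherwise), so by Caratheodory the grid weights of a group can be replaced by at most as
   many atoms as there are monomials of that degree, matching all moments.  Finally round
   the weights to multiples of sigma eta / (4 N), where N is the total number of atoms.  The
   resulting finite net has log-cardinality of order N log (1/(sigma eta)), and
   N <= N(cover) * O(zeta log (1/(sigma eta)))^p. *)

section \<open>Estimates for the Gaussian density\<close>

lemma sqrt_two_pi_ge_one: "1 \<le> sqrt (2 * pi)"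
  using pi_gt3 by (simp add: real_sqrt_ge_one)

lemma std_normal_density_le_exp: "std_normal_density u \<le> exp (- u\<^sup>2 / 2)"
proof -
  have "exp (- u\<^sup>2 / 2) / sqrt (2 * pi) \<le> exp (- u\<^sup>2 / 2) / 1"
    using sqrt_two_pi_ge_one by (intro divide_left_mono) auto
  then show ?thesis unfolding std_normal_density_def by simp
qed

lemma std_normal_density_le_one: "std_normal_density u \<le> 1"
proof -
  have "exp (- u\<^sup>2 / 2) \<le> 1" by simp
  then show ?thesis using std_normal_density_le_exp[of u] by linarith
qed

lemma abs_mult_exp_neg_square_le_one: "\<bar>u\<bar> * exp (- u\<^sup>2 / 2) \<le> (1::real)"
proof -
  have "0 \<le> (\<bar>u\<bar> - 1)\<^sup>2" by simp
  then have "\<bar>u\<bar> \<le> 1 + u\<^sup>2 / 2"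
    by (simp add: power2_diff power2_abs)
  also have "\<dots> \<le> exp (u\<^sup>2 / 2)" by (rule exp_ge_add_one_self)
  finally show ?thesis by (simp add: exp_minus field_simps)
qed

lemma std_normal_density_lipschitz:
  "\<bar>std_normal_density u - std_normal_density v\<bar> \<le> \<bar>u - v\<bar>"
proof -
  define D where "D w = (1 / sqrt (2 * pi)) * (exp (- w\<^sup>2 / 2) * (- w))" for w
  have deriv: "(std_normal_density has_real_derivative D w) (at w)" for w
    unfolding std_normal_density_def D_def by (rule derivative_eq_intros refl | simp)+
  have D_bound: "\<bar>D w\<bar> \<le> 1" for w
  proof -
    have "\<bar>D w\<bar> = (1 / sqrt (2 * pi)) * (\<bar>w\<bar> * exp (- w\<^sup>2 / 2))"
      by (simp add: D_def abs_mult)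
    also have "\<dots> \<le> 1 * 1"
      using sqrt_two_pi_ge_one abs_mult_exp_neg_square_le_one[of w]
      by (intro mult_mono) (auto simp: divide_le_eq)
    finally show ?thesis by simp
  qed
  have ordered: "\<bar>std_normal_density b - std_normal_density a\<bar> \<le> b - a" if ab: "a < b" for a b
  proof -
    obtain z where "std_normal_density b - std_normal_density a = (b - a) * D z"
      using MVT2[OF ab, of std_normal_density D] deriv by blast
    then show ?thesis
      using D_bound[of z] ab by (simp add: abs_mult mult_left_le)
  qed
  show ?thesis
    by (cases u v rule: linorder_cases)
      (use ordered[of u v] ordered[of v u] in \<open>auto simp: abs_minus_commute\<close>)
qed

lemma exp_neg_three_le: "exp (- 3) \<le> (1 / 8 :: real)"
proof -
  have "(2::real) ^ 3 \<le> exp 1 ^ 3"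
    using exp_ge_add_one_self[of 1] by (intro power_mono) auto
  then have "8 \<le> exp (3::real)" by (simp add: exp_of_nat_mult[symmetric])
  then show ?thesis by (simp add: exp_minus field_simps)
qed

lemma power_div_fact_le_exp: "0 \<le> x \<Longrightarrow> x ^ k / fact k \<le> exp (x::real)"
proof -
  assume x: "0 \<le> x"
  have "summable (\<lambda>n. x ^ n / fact n)"
    using summable_exp[of x] by (simp add: divide_inverse mult.commute)
  then have "(\<Sum>n\<in>{k}. x ^ n / fact n) \<le> (\<Sum>n. x ^ n / fact n)"
    by (rule sum_le_suminf) (use x in auto)
  also have "(\<Sum>n. x ^ n / fact n) = exp x"
    by (simp add: exp_def scaleR_conv_of_real divide_inverse mult.commute)
  finally show ?thesis by simp
qed

lemma exp_neg_taylor_error: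
  fixes t :: real
  assumes "0 \<le> t"
  shows "\<bar>exp (- t) - (\<Sum>m<k. (- t) ^ m / fact m)\<bar> \<le> exp (4 * t - real k)"
proof -
  obtain s where s: "\<bar>s\<bar> \<le> \<bar>-t\<bar>"
    and eq: "exp (-t) = (\<Sum>m<k. (- t) ^ m / fact m) + (exp s / fact k) * (-t) ^ k"
    using Maclaurin_exp_le[of "-t" k] by blast
  have "\<bar>exp (- t) - (\<Sum>m<k. (- t) ^ m / fact m)\<bar> = exp s * (t ^ k / fact k)"
    unfolding eq using assms by (simp add: abs_mult power_abs)
  also have "\<dots> \<le> exp t * (t ^ k / fact k)"
    using s assms by (intro mult_right_mono) auto
  also have "t ^ k / fact k = ((exp 1 * t) ^ k / fact k) / exp (real k)"
    by (simp add: power_mult_distrib exp_of_nat_mult[symmetric])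
  also have "exp t * (((exp 1 * t) ^ k / fact k) / exp (real k)) \<le> exp t * (exp (exp 1 * t) / exp (real k))"
    using power_div_fact_le_exp[of "exp 1 * t" k] assms
    by (intro mult_left_mono divide_right_mono) auto
  also have "\<dots> = exp (t + exp 1 * t - real k)" by (simp add: exp_add exp_diff)
  also have "\<dots> \<le> exp (4 * t - real k)"
    using exp_le assms mult_right_mono[of "exp 1" 3 t] by simp
  finally show ?thesis .
qed

section \<open>Polynomials in several variables\<close>

definition multi_indices :: "nat \<Rightarrow> ('p::finite \<Rightarrow> nat) set" where
  "multi_indices d = {\<alpha>. (\<Sum>i\<in>UNIV. \<alpha> i) \<le> d}"

definition monomial_vec :: "('p::finite \<Rightarrow> nat) \<Rightarrow> real^'p \<Rightarrow> real" where
  "monomial_vec \<alpha> \<beta> = (\<Prod>i\<in>UNIV. (\<beta> $ i) ^ \<alpha> i)"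

lemma multi_indices_subset_PiE: "multi_indices d \<subseteq> Pi\<^sub>E (UNIV::'p::finite set) (\<lambda>_. {..d})"
proof
  fix \<alpha> :: "'p \<Rightarrow> nat" assume "\<alpha> \<in> multi_indices d"
  then have "(\<Sum>i\<in>UNIV. \<alpha> i) \<le> d" by (simp add: multi_indices_def)
  moreover have "\<alpha> i \<le> (\<Sum>i\<in>UNIV. \<alpha> i)" for i by (rule member_le_sum) auto
  ultimately show "\<alpha> \<in> Pi\<^sub>E UNIV (\<lambda>_. {..d})" by (auto intro: le_trans)
qed

lemma finite_multi_indices: "finite (multi_indices d :: ('p::finite \<Rightarrow> nat) set)"
  by (rule finite_subset[OF multi_indices_subset_PiE]) (auto intro: finite_PiE)

lemma card_multi_indices_le: "card (multi_indices d :: ('p::finite \<Rightarrow> nat) set) \<le> (d + 1) ^ CARD('p)"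
proof -
  have "card (multi_indices d :: ('p \<Rightarrow> nat) set) \<le> card (Pi\<^sub>E (UNIV::'p set) (\<lambda>_. {..d}))"
    by (rule card_mono[OF _ multi_indices_subset_PiE]) (auto intro: finite_PiE)
  also have "\<dots> = (d + 1) ^ CARD('p)" by (simp add: card_PiE)
  finally show ?thesis .
qed

lemma zero_in_multi_indices: "(\<lambda>_. 0) \<in> multi_indices d"
  by (simp add: multi_indices_def)

lemma multi_indices_mono: "d \<le> d' \<Longrightarrow> multi_indices d \<subseteq> multi_indices d'"
  by (auto simp: multi_indices_def)

lemma monomial_vec_zero [simp]: "monomial_vec (\<lambda>_. 0) \<beta> = 1"
  by (simp add: monomial_vec_def)

lemma monomial_vec_add: "monomial_vec (\<lambda>i. \<alpha> i + \<alpha>' i) \<beta> = monomial_vec \<alpha> \<beta> * monomial_vec \<alpha>' \<beta>"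
  by (simp add: monomial_vec_def power_add prod.distrib)

lemma poly_deg_le_iff:
  "poly_deg_le d f \<longleftrightarrow> (\<exists>c. \<forall>\<beta>. f \<beta> = (\<Sum>\<alpha>\<in>multi_indices d. c \<alpha> * monomial_vec \<alpha> \<beta>))"
  by (simp add: poly_deg_le_def multi_indices_def monomial_vec_def)

lemma poly_deg_le_mono:
  assumes "poly_deg_le d f" "d \<le> d'"
  shows "poly_deg_le d' f"
proof -
  obtain c where c: "\<And>\<beta>. f \<beta> = (\<Sum>\<alpha>\<in>multi_indices d. c \<alpha> * monomial_vec \<alpha> \<beta>)"
    using assms(1) by (auto simp: poly_deg_le_iff)
  define c' where "c' \<alpha> = (if \<alpha> \<in> multi_indices d then c \<alpha> else 0)" for \<alpha>
  have "(\<Sum>\<alpha>\<in>multi_indices d'. c' \<alpha> * monomial_vec \<alpha> \<beta>) = (\<Sum>\<alpha>\<in>multi_indices d. c' \<alpha> * monomial_vec \<alpha> \<beta>)" for \<beta>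
    by (rule sum.mono_neutral_right)
      (use multi_indices_mono[OF assms(2)] finite_multi_indices in \<open>auto simp: c'_def\<close>)
  then show ?thesis unfolding poly_deg_le_iff by (intro exI[of _ c']) (simp add: c c'_def)
qed

lemma poly_deg_le_const: "poly_deg_le d (\<lambda>_::real^'p::finite. a)"
proof -
  define c where "c \<alpha> = (if \<alpha> = (\<lambda>_. 0) then a else 0)" for \<alpha> :: "'p \<Rightarrow> nat"
  have "(\<Sum>\<alpha>\<in>multi_indices d. c \<alpha> * monomial_vec \<alpha> \<beta>)
      = (\<Sum>\<alpha>\<in>multi_indices d. if \<alpha> = (\<lambda>_. 0) then a * monomial_vec \<alpha> \<beta> else 0)" for \<beta> :: "real^'p"
    by (rule sum.cong) (auto simp: c_def)
  then have "(\<Sum>\<alpha>\<in>multi_indices d. c \<alpha> * monomial_vec \<alpha> \<beta>) = a" for \<beta> :: "real^'p"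
    by (simp add: finite_multi_indices zero_in_multi_indices)
  then show ?thesis unfolding poly_deg_le_iff by (intro exI[of _ c]) auto
qed

lemma poly_deg_le_add:
  assumes "poly_deg_le d f" "poly_deg_le d g"
  shows "poly_deg_le d (\<lambda>\<beta>. f \<beta> + g \<beta>)"
proof -
  obtain c c' where "\<And>\<beta>. f \<beta> = (\<Sum>\<alpha>\<in>multi_indices d. c \<alpha> * monomial_vec \<alpha> \<beta>)"
    "\<And>\<beta>. g \<beta> = (\<Sum>\<alpha>\<in>multi_indices d. c' \<alpha> * monomial_vec \<alpha> \<beta>)"
    using assms by (auto simp: poly_deg_le_iff)
  then show ?thesis unfolding poly_deg_le_iff
    by (intro exI[of _ "\<lambda>\<alpha>. c \<alpha> + c' \<alpha>"]) (simp add: sum.distrib distrib_right)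
qed

lemma poly_deg_le_cmult:
  assumes "poly_deg_le d f"
  shows "poly_deg_le d (\<lambda>\<beta>. a * f \<beta>)"
proof -
  obtain c where "\<And>\<beta>. f \<beta> = (\<Sum>\<alpha>\<in>multi_indices d. c \<alpha> * monomial_vec \<alpha> \<beta>)"
    using assms by (auto simp: poly_deg_le_iff)
  then show ?thesis unfolding poly_deg_le_iff
    by (intro exI[of _ "\<lambda>\<alpha>. a * c \<alpha>"]) (simp add: sum_distrib_left mult.assoc)
qed

lemma poly_deg_le_mult:
  fixes f g :: "real^'p::finite \<Rightarrow> real"
  assumes "poly_deg_le a f" "poly_deg_le b g"
  shows "poly_deg_le (a + b) (\<lambda>\<beta>. f \<beta> * g \<beta>)"
proof -
  obtain c c' where c: "\<And>\<beta>. f \<beta> = (\<Sum>\<alpha>\<in>multi_indices a. c \<alpha> * monomial_vec \<alpha> \<beta>)"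
    and c': "\<And>\<beta>. g \<beta> = (\<Sum>\<alpha>\<in>multi_indices b. c' \<alpha> * monomial_vec \<alpha> \<beta>)"
    using assms by (auto simp: poly_deg_le_iff)
  define s where "s p = (\<lambda>i. fst p i + snd p i)" for p :: "('p \<Rightarrow> nat) \<times> ('p \<Rightarrow> nat)"
  define Pairs :: "(('p \<Rightarrow> nat) \<times> ('p \<Rightarrow> nat)) set"
    where "Pairs = multi_indices a \<times> multi_indices b"
  define e where "e \<gamma> = (\<Sum>p\<in>{p \<in> Pairs. s p = \<gamma>}. c (fst p) * c' (snd p))" for \<gamma>
  have s_Pairs: "s ` Pairs \<subseteq> multi_indices (a + b)"
    by (auto simp: s_def Pairs_def multi_indices_def sum.distrib)
  have "f \<beta> * g \<beta> = (\<Sum>\<gamma>\<in>multi_indices (a + b). e \<gamma> * monomial_vec \<gamma> \<beta>)" for \<beta>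
  proof -
    have "f \<beta> * g \<beta> = (\<Sum>p\<in>Pairs. c (fst p) * c' (snd p) * monomial_vec (s p) \<beta>)"
      unfolding c c' sum_product Pairs_def sum.cartesian_product
      by (rule sum.cong) (auto simp: s_def monomial_vec_add)
    also have "\<dots> = (\<Sum>\<gamma>\<in>multi_indices (a + b). \<Sum>p\<in>{p \<in> Pairs. s p = \<gamma>}. c (fst p) * c' (snd p) * monomial_vec (s p) \<beta>)"
      by (rule sum.group[symmetric]) (use s_Pairs in \<open>auto simp: finite_multi_indices Pairs_def\<close>)
    also have "\<dots> = (\<Sum>\<gamma>\<in>multi_indices (a + b). e \<gamma> * monomial_vec \<gamma> \<beta>)"
      unfolding e_def sum_distrib_right by (intro sum.cong refl) auto
    finally show ?thesis .
  qed
  then show ?thesis unfolding poly_deg_le_iff by blast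
qed

lemma poly_deg_le_power:
  assumes "poly_deg_le d f"
  shows "poly_deg_le (d * m) (\<lambda>\<beta>. f \<beta> ^ m)"
proof (induction m)
  case 0
  then show ?case by (simp add: poly_deg_le_const)
next
  case (Suc m)
  have "poly_deg_le (d + d * m) (\<lambda>\<beta>. f \<beta> * f \<beta> ^ m)" by (rule poly_deg_le_mult[OF assms Suc])
  then show ?case by (simp add: algebra_simps)
qed

lemma poly_deg_le_sum:
  assumes "finite A" "\<And>i. i \<in> A \<Longrightarrow> poly_deg_le d (f i)"
  shows "poly_deg_le d (\<lambda>\<beta>. \<Sum>i\<in>A. f i \<beta>)"
  using assms by (induction A rule: finite_induct) (auto simp: poly_deg_le_const intro!: poly_deg_le_add)

lemma continuous_on_poly_deg_le:
  assumes "poly_deg_le d f"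
  shows "continuous_on S f"
proof -
  obtain c where "\<And>\<beta>. f \<beta> = (\<Sum>\<alpha>\<in>multi_indices d. c \<alpha> * monomial_vec \<alpha> \<beta>)"
    using assms by (auto simp: poly_deg_le_iff)
  then have "f = (\<lambda>\<beta>. \<Sum>\<alpha>\<in>multi_indices d. c \<alpha> * monomial_vec \<alpha> \<beta>)" by auto
  then show ?thesis by (simp add: continuous_intros monomial_vec_def)
qed

section \<open>Caratheodory's theorem for cones\<close>

lemma exists_nontrivial_vanishing_combination:
  fixes V :: "'i \<Rightarrow> 'a \<Rightarrow> real"
  assumes "finite I" "finite F" "card I < card F"
  shows "\<exists>c. (\<exists>i\<in>F. c i \<noteq> 0) \<and> (\<forall>\<alpha>\<in>I. (\<Sum>i\<in>F. c i * V i \<alpha>) = 0)"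
  using assms
proof (induction I arbitrary: F V rule: finite_induct)
  case empty
  then have "F \<noteq> {}" by auto
  then show ?case by (intro exI[of _ "\<lambda>_. 1"]) auto
next
  case (insert a I)
  show ?case
  proof (cases "\<forall>i\<in>F. V i a = 0")
    case True
    obtain c where "\<exists>i\<in>F. c i \<noteq> 0" "\<forall>\<alpha>\<in>I. (\<Sum>i\<in>F. c i * V i \<alpha>) = 0"
      using insert.IH[of F V] insert.prems insert.hyps by auto
    then show ?thesis using True by (intro exI[of _ c]) auto
  next
    case False
    then obtain k where k: "k \<in> F" "V k a \<noteq> 0" by blast
    \<comment> \<open>Gaussian elimination: clear the coordinate a with the pivot row k.\<close>
    define F' where "F' = F - {k}"
    define W where "W i \<alpha> = V i \<alpha> - (V i a / V k a) * V k \<alpha>" for i \<alpha>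
    have "card I < card F'"
      using k insert.prems insert.hyps by (simp add: F'_def)
    then obtain c' where c': "\<exists>i\<in>F'. c' i \<noteq> 0" "\<forall>\<alpha>\<in>I. (\<Sum>i\<in>F'. c' i * W i \<alpha>) = 0"
      using insert.IH[of F' W] insert.prems by (auto simp: F'_def)
    define c where "c i = (if i = k then - (\<Sum>j\<in>F'. c' j * V j a) / V k a else c' i)" for i
    have combination: "(\<Sum>i\<in>F. c i * V i \<alpha>) = (\<Sum>i\<in>F'. c' i * W i \<alpha>)" for \<alpha>
    proof -
      have "(\<Sum>i\<in>F. c i * V i \<alpha>) = c k * V k \<alpha> + (\<Sum>i\<in>F'. c i * V i \<alpha>)"
        unfolding F'_def by (rule sum.remove[OF insert.prems(1) k(1)])
      also have "(\<Sum>i\<in>F'. c i * V i \<alpha>) = (\<Sum>i\<in>F'. c' i * V i \<alpha>)"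
        by (rule sum.cong) (auto simp: c_def F'_def)
      also have "(\<Sum>i\<in>F'. c' i * W i \<alpha>)
          = (\<Sum>i\<in>F'. c' i * V i \<alpha>) - (\<Sum>i\<in>F'. c' i * V i a) * (V k \<alpha> / V k a)"
      proof -
        have scaled: "c' i * W i \<alpha> = c' i * V i \<alpha> - (c' i * V i a) * (V k \<alpha> / V k a)" for i
          using k(2) by (simp add: W_def field_simps)
        show ?thesis unfolding scaled sum_subtractf sum_distrib_right[symmetric] by simp
      qed
      ultimately show ?thesis by (simp add: c_def)
    qed
    have "W i a = 0" for i using k by (simp add: W_def)
    then have "\<forall>\<alpha>\<in>insert a I. (\<Sum>i\<in>F. c i * V i \<alpha>) = 0"
      using c' by (auto simp: combination)
    moreover have "\<exists>i\<in>F. c i \<noteq> 0" using c' by (auto simp: c_def F'_def)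
    ultimately show ?thesis by blast
  qed
qed

lemma exists_vanishing_combination_with_pos:
  fixes V :: "'i \<Rightarrow> 'a \<Rightarrow> real"
  assumes "finite I" "finite F" "card I < card F"
  shows "\<exists>c. (\<exists>i\<in>F. 0 < c i) \<and> (\<forall>\<alpha>\<in>I. (\<Sum>i\<in>F. c i * V i \<alpha>) = 0)"
proof -
  obtain c where c: "\<exists>i\<in>F. c i \<noteq> 0" "\<forall>\<alpha>\<in>I. (\<Sum>i\<in>F. c i * V i \<alpha>) = 0"
    using exists_nontrivial_vanishing_combination[OF assms] by blast
  show ?thesis
  proof (cases "\<exists>i\<in>F. 0 < c i")
    case True
    then show ?thesis using c(2) by (intro exI[of _ c] conjI)
  next
    case False
    then have "\<exists>i\<in>F. 0 < - c i" using c(1) by force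
    moreover have "\<forall>\<alpha>\<in>I. (\<Sum>i\<in>F. - c i * V i \<alpha>) = 0" using c(2) by (simp add: sum_negf)
    ultimately show ?thesis by (intro exI[of _ "\<lambda>i. - c i"] conjI)
  qed
qed

lemma nonneg_combination_remove_one:
  fixes V :: "'i \<Rightarrow> 'a \<Rightarrow> real"
  assumes I: "finite I" and F: "finite F" "card I < card F" and w: "\<forall>i\<in>F. 0 \<le> w i"
  shows "\<exists>i0\<in>F. \<exists>w'. (\<forall>i\<in>F - {i0}. 0 \<le> w' i) \<and>
     (\<forall>\<alpha>\<in>I. (\<Sum>i\<in>F - {i0}. w' i * V i \<alpha>) = (\<Sum>i\<in>F. w i * V i \<alpha>))"
proof -
  obtain cp where cp: "\<exists>i\<in>F. 0 < cp i" "\<forall>\<alpha>\<in>I. (\<Sum>i\<in>F. cp i * V i \<alpha>) = 0"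
    using exists_vanishing_combination_with_pos[OF I F] by blast
  \<comment> \<open>Move along the vanishing direction cp until the first weight hits zero.\<close>
  define P where "P = {i\<in>F. 0 < cp i}"
  have P: "finite P" "P \<noteq> {}" using cp F by (auto simp: P_def)
  define t where "t = Min ((\<lambda>i. w i / cp i) ` P)"
  have "t \<in> (\<lambda>i. w i / cp i) ` P" unfolding t_def using P by (intro Min_in) auto
  then obtain i0 where i0: "i0 \<in> P" "w i0 / cp i0 = t" by auto
  have t_le: "t \<le> w i / cp i" if "i \<in> P" for i unfolding t_def using P that by auto
  have t_nonneg: "0 \<le> t" using i0 w by (auto simp: P_def)
  define w' where "w' i = w i - t * cp i" for i
  have "0 \<le> w' i" if "i \<in> F" for i
  proof (cases "0 < cp i")
    case True
    then show ?thesis using t_le[of i] that by (simp add: w'_def P_def pos_le_divide_eq)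
  next
    case False
    then have "t * cp i \<le> 0" using t_nonneg by (simp add: mult_nonneg_nonpos)
    then show ?thesis using bspec[OF w that] by (simp add: w'_def)
  qed
  moreover have "(\<Sum>i\<in>F - {i0}. w' i * V i \<alpha>) = (\<Sum>i\<in>F. w i * V i \<alpha>)" if "\<alpha> \<in> I" for \<alpha>
  proof -
    have "w' i0 = 0" using i0 by (auto simp: w'_def P_def)
    then have "(\<Sum>i\<in>F - {i0}. w' i * V i \<alpha>) = (\<Sum>i\<in>F. w' i * V i \<alpha>)"
      using F i0 by (simp add: sum_diff1 P_def)
    also have "\<dots> = (\<Sum>i\<in>F. w i * V i \<alpha>) - t * (\<Sum>i\<in>F. cp i * V i \<alpha>)"
    proof -
      have "w' i * V i \<alpha> = w i * V i \<alpha> - t * (cp i * V i \<alpha>)" for i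
        by (simp add: w'_def algebra_simps)
      then show ?thesis by (simp add: sum_subtractf sum_distrib_left)
    qed
    finally show ?thesis using cp(2) that by simp
  qed
  ultimately show ?thesis using i0 by (auto simp: P_def)
qed

lemma nonneg_combination_reduce_support:
  fixes V :: "'i \<Rightarrow> 'a \<Rightarrow> real"
  assumes I: "finite I" and "finite F" "\<forall>i\<in>F. 0 \<le> w i"
  shows "\<exists>F' w'. F' \<subseteq> F \<and> card F' \<le> card I \<and> (\<forall>i\<in>F'. 0 \<le> w' i) \<and>
     (\<forall>\<alpha>\<in>I. (\<Sum>i\<in>F'. w' i * V i \<alpha>) = (\<Sum>i\<in>F. w i * V i \<alpha>))"
  using assms(2,3)
proof (induction "card F" arbitrary: F w rule: less_induct)
  case less
  show ?case
  proof (cases "card F \<le> card I")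
    case True
    then show ?thesis using less.prems by blast
  next
    case False
    then have "card I < card F" by simp
    then obtain i0 w2 where i0: "i0 \<in> F" and w2: "\<forall>i\<in>F - {i0}. 0 \<le> w2 i"
      "\<forall>\<alpha>\<in>I. (\<Sum>i\<in>F - {i0}. w2 i * V i \<alpha>) = (\<Sum>i\<in>F. w i * V i \<alpha>)"
      using nonneg_combination_remove_one[OF I less.prems(1) _ less.prems(2)] by blast
    have "0 < card F" using i0 less.prems(1) card_gt_0_iff by blast
    then have "card (F - {i0}) < card F" using i0 less.prems(1) by simp
    then obtain F' w' where "F' \<subseteq> F - {i0}" "card F' \<le> card I" "\<forall>i\<in>F'. 0 \<le> w' i"
      "\<forall>\<alpha>\<in>I. (\<Sum>i\<in>F'. w' i * V i \<alpha>) = (\<Sum>i\<in>F - {i0}. w2 i * V i \<alpha>)"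
      using less.hyps[of "F - {i0}" w2] less.prems(1) w2(1) by auto
    then show ?thesis using w2(2) by (intro exI[of _ F'] exI[of _ w']) auto
  qed
qed

section \<open>Counting bounded integer vectors\<close>

lemma sum_power_atMost_le:
  assumes "0 \<le> q" "q < (1::real)"
  shows "(\<Sum>c\<in>{..M}. q ^ c) \<le> 1 / (1 - q)"
proof -
  have "(\<Sum>c\<in>{..M}. q ^ c) = (\<Sum>c<Suc M. q ^ c)" by (simp add: lessThan_Suc_atMost)
  also have "\<dots> = (1 - q ^ Suc M) / (1 - q)" using assms by (subst sum_gp_strict) auto
  also have "\<dots> \<le> 1 / (1 - q)" using assms by (intro divide_right_mono) auto
  finally show ?thesis .
qed

lemma card_bounded_sum_vectors_le:
  fixes J :: "'i set"
  assumes J: "finite J" and q: "0 < q" "q < 1"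
  shows "real (card {\<kappa> \<in> Pi\<^sub>E J (\<lambda>_. {..M}). (\<Sum>i\<in>J. \<kappa> i) \<le> M})
           \<le> (1 / (1 - q)) ^ card J / q ^ M"
proof -
  define A where "A = {\<kappa> \<in> Pi\<^sub>E J (\<lambda>_. {..M}). (\<Sum>i\<in>J. \<kappa> i) \<le> M}"
  have fin: "finite (Pi\<^sub>E J (\<lambda>_. {..M}))" using J by (intro finite_PiE) auto
  \<comment> \<open>Each admissible vector has weight \<open>q ^ (\<Sum>i\<in>J. \<kappa> i) / q ^ M \<ge> 1\<close>; sum the weights over the whole box.\<close>
  have "real (card A) \<le> (\<Sum>\<kappa>\<in>A. q ^ (\<Sum>i\<in>J. \<kappa> i) / q ^ M)"
  proof -
    have "1 \<le> q ^ (\<Sum>i\<in>J. \<kappa> i) / q ^ M" if "\<kappa> \<in> A" for \<kappa>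
      using that q power_decreasing[of "\<Sum>i\<in>J. \<kappa> i" M q] by (auto simp: A_def)
    then have "(\<Sum>\<kappa>\<in>A. 1) \<le> (\<Sum>\<kappa>\<in>A. q ^ (\<Sum>i\<in>J. \<kappa> i) / q ^ M)" by (rule sum_mono)
    then show ?thesis by simp
  qed
  also have "\<dots> \<le> (\<Sum>\<kappa>\<in>Pi\<^sub>E J (\<lambda>_. {..M}). q ^ (\<Sum>i\<in>J. \<kappa> i) / q ^ M)"
    by (rule sum_mono2[OF fin]) (use q in \<open>auto simp: A_def\<close>)
  also have "\<dots> = (\<Sum>\<kappa>\<in>Pi\<^sub>E J (\<lambda>_. {..M}). \<Prod>i\<in>J. q ^ \<kappa> i) / q ^ M"
    by (simp add: sum_divide_distrib power_sum)
  also have "(\<Sum>\<kappa>\<in>Pi\<^sub>E J (\<lambda>_. {..M}). \<Prod>i\<in>J. q ^ \<kappa> i) = (\<Sum>c\<in>{..M}. q ^ c) ^ card J"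
    using prod_sum_PiE[of J "\<lambda>_. {..M}" "\<lambda>_ c. q ^ c"] J by simp
  also have "(\<Sum>c\<in>{..M}. q ^ c) ^ card J / q ^ M \<le> (1 / (1 - q)) ^ card J / q ^ M"
    using sum_power_atMost_le[of q M] q
    by (intro divide_right_mono power_mono) (auto intro: sum_nonneg)
  finally show ?thesis unfolding A_def .
qed

lemma ln_card_bounded_sum_vectors_le:
  fixes J :: "'i set"
  assumes J: "finite J" "card J = N" "1 \<le> N"
  shows "ln (real (card {\<kappa> \<in> Pi\<^sub>E J (\<lambda>_. {..M}). (\<Sum>i\<in>J. \<kappa> i) \<le> M}))
          \<le> real N * (1 + ln (1 + real M / real N))"
proof (cases "M = 0")
  case True
  have "card {\<kappa> \<in> Pi\<^sub>E J (\<lambda>_. {..M}). (\<Sum>i\<in>J. \<kappa> i) \<le> M} \<le> card (Pi\<^sub>E J (\<lambda>_. {..M}))"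
    using J by (intro card_mono finite_PiE) auto
  also have "\<dots> = 1" using True J by (simp add: card_PiE)
  finally show ?thesis by (cases "card {\<kappa> \<in> Pi\<^sub>E J (\<lambda>_. {..M}). (\<Sum>i\<in>J. \<kappa> i) \<le> M}") auto
next
  case False
  define q where "q = real M / (real M + real N)"
  have q: "0 < q" "q < 1" using False J by (auto simp: q_def)
  have inv_1q: "1 / (1 - q) = 1 + real M / real N" and inv_q: "1 / q = 1 + real N / real M"
    using False J by (simp_all add: q_def field_simps)
  have "ln ((1 / (1 - q)) ^ N / q ^ M) = real N * ln (1 + real M / real N) + real M * ln (1 + real N / real M)"
    using q by (simp add: ln_div ln_realpow inv_1q[symmetric] ln_div[of 1 q, simplified] inv_q[symmetric])
  also have "real M * ln (1 + real N / real M) \<le> real M * (real N / real M)"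
    by (intro mult_left_mono ln_add_one_self_le_self) auto
  also have "real M * (real N / real M) = real N" using False by simp
  finally have "ln ((1 / (1 - q)) ^ N / q ^ M) \<le> real N * (1 + ln (1 + real M / real N))"
    by (simp add: algebra_simps)
  moreover have "real (card {\<kappa> \<in> Pi\<^sub>E J (\<lambda>_. {..M}). (\<Sum>i\<in>J. \<kappa> i) \<le> M}) \<le> (1 / (1 - q)) ^ N / q ^ M"
    using card_bounded_sum_vectors_le[OF J(1) q] J(2) by simp
  ultimately show ?thesis using q
    by (cases "card {\<kappa> \<in> Pi\<^sub>E J (\<lambda>_. {..M}). (\<Sum>i\<in>J. \<kappa> i) \<le> M} = 0") (auto intro: order.trans[OF ln_mono])
qed

lemma measure_partition_sum_eq_one:
  fixes G :: "'a::topological_space measure"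
  assumes G: "prob_space G" "sets G = sets borel" "emeasure G K = 1"
    and fin: "finite Gr" and meas: "\<forall>g\<in>Gr. P g \<in> sets borel"
    and disj: "disjoint_family_on P Gr" and cov: "K \<subseteq> (\<Union>g\<in>Gr. P g)"
  shows "(\<Sum>g\<in>Gr. measure G (P g)) = 1"
proof -
  interpret prob_space G by (rule G(1))
  have Pm: "P g \<in> sets G" if "g \<in> Gr" for g using meas that G(2) by auto
  have "measure G K = 1" using G(3) by (simp add: measure_def)
  moreover have "measure G K \<le> measure G (\<Union>g\<in>Gr. P g)"
    using cov Pm fin by (intro finite_measure_mono) auto
  moreover have "measure G (\<Union>g\<in>Gr. P g) = (\<Sum>g\<in>Gr. measure G (P g))"
    by (rule measure_finite_Union[OF fin _ disj]) (use Pm in \<open>auto simp: emeasure_finite\<close>)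
  ultimately show ?thesis using prob_le_1[of "\<Union>g\<in>Gr. P g"] by linarith
qed

lemma integral_eq_sum_partition:
  fixes G :: "'a::euclidean_space measure" and f :: "'a \<Rightarrow> real"
  assumes G: "prob_space G" "sets G = sets borel" "emeasure G K = 1"
    and fin: "finite Gr" and meas: "\<forall>g\<in>Gr. P g \<in> sets borel"
    and disj: "disjoint_family_on P Gr" and cov: "K \<subseteq> (\<Union>g\<in>Gr. P g)"
    and int: "integrable G f"
  shows "(\<integral>\<beta>. f \<beta> \<partial>G) = (\<Sum>g\<in>Gr. \<integral>\<beta>. f \<beta> * indicator (P g) \<beta> \<partial>G)"
proof -
  interpret prob_space G by (rule G(1))
  have Pm: "P g \<in> sets G" if "g \<in> Gr" for g using meas that G(2) by auto
  have "measure G (\<Union>g\<in>Gr. P g) = (\<Sum>g\<in>Gr. measure G (P g))"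
    by (rule measure_finite_Union[OF fin _ disj]) (use Pm in \<open>auto simp: emeasure_finite\<close>)
  then have "measure G (\<Union>g\<in>Gr. P g) = 1"
    using measure_partition_sum_eq_one[OF G fin meas disj cov] by simp
  then have "AE \<beta> in G. f \<beta> = (\<Sum>g\<in>Gr. f \<beta> * indicator (P g) \<beta>)"
  proof (rule AE_prob_1[THEN eventually_mono])
    fix \<beta> assume "\<beta> \<in> (\<Union>g\<in>Gr. P g)"
    then obtain j where "j \<in> Gr" "\<beta> \<in> P j" by auto
    then show "f \<beta> = (\<Sum>g\<in>Gr. f \<beta> * indicator (P g) \<beta>)"
      using sum_indicator_disjoint_family[OF disj, of \<beta> j "\<lambda>_. f \<beta>"] fin by simp
  qed
  moreover have "(\<lambda>\<beta>. \<Sum>g\<in>Gr. f \<beta> * indicator (P g) \<beta>) \<in> borel_measurable G"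
    using borel_measurable_integrable[OF int] Pm
    by (intro borel_measurable_sum borel_measurable_times borel_measurable_indicator) auto
  ultimately have "(\<integral>\<beta>. f \<beta> \<partial>G) = (\<integral>\<beta>. (\<Sum>g\<in>Gr. f \<beta> * indicator (P g) \<beta>) \<partial>G)"
    using borel_measurable_integrable[OF int] by (intro integral_cong_AE)
  also have "\<dots> = (\<Sum>g\<in>Gr. \<integral>\<beta>. f \<beta> * indicator (P g) \<beta> \<partial>G)"
    using Bochner_Integration.integral_sum[where I=Gr and M=G and f="\<lambda>g \<beta>. f \<beta> * indicator (P g) \<beta>"]
      integrable_real_mult_indicator[OF Pm int] by simp
  finally show ?thesis .
qed

lemma integral_indicator_approx:
  fixes G :: "'a::euclidean_space measure" and f :: "'a \<Rightarrow> real"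
  assumes "prob_space G" and A: "A \<in> sets G" and int: "integrable G f"
    and close: "\<forall>\<beta>\<in>A. \<bar>f \<beta> - c\<bar> \<le> \<epsilon>"
  shows "\<bar>(\<integral>\<beta>. f \<beta> * indicator A \<beta> \<partial>G) - measure G A * c\<bar> \<le> \<epsilon> * measure G A"
proof -
  interpret prob_space G by fact
  have A_space: "A \<inter> space G = A" using sets.sets_into_space[OF A] by auto
  have int_const: "integrable G (\<lambda>\<beta>. a * indicator A \<beta>)" for a :: real
    using A by (intro integrable_real_mult_indicator) auto
  have int_f: "integrable G (\<lambda>\<beta>. f \<beta> * indicator A \<beta>)"
    by (rule integrable_real_mult_indicator[OF A int])
  have "(\<integral>\<beta>. f \<beta> * indicator A \<beta> \<partial>G) - measure G A * c
      = (\<integral>\<beta>. f \<beta> * indicator A \<beta> - c * indicator A \<beta> \<partial>G)"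
    using int_f int_const by (simp add: A_space)
  also have "\<bar>\<dots>\<bar> \<le> (\<integral>\<beta>. \<epsilon> * indicator A \<beta> \<partial>G)"
  proof (rule integral_abs_bound_integral)
    show "integrable G (\<lambda>\<beta>. f \<beta> * indicator A \<beta> - c * indicator A \<beta>)"
      using int_f int_const by auto
    fix \<beta>
    show "\<bar>f \<beta> * indicator A \<beta> - c * indicator A \<beta>\<bar> \<le> \<epsilon> * indicator A \<beta>"
      using close by (auto split: split_indicator simp: left_diff_distrib[symmetric])
  qed (rule int_const)
  also have "\<dots> = \<epsilon> * measure G A" by (simp add: A_space)
  finally show ?thesis .
qed

lemma integral_partition_approx:
  fixes G :: "'a::euclidean_space measure" and f :: "'a \<Rightarrow> real"
  assumes G: "prob_space G" "sets G = sets borel" "emeasure G K = 1"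
    and fin: "finite Gr" and meas: "\<forall>g\<in>Gr. P g \<in> sets borel"
    and disj: "disjoint_family_on P Gr" and cov: "K \<subseteq> (\<Union>g\<in>Gr. P g)"
    and f: "f \<in> borel_measurable borel" and bnd: "\<forall>\<beta>. \<bar>f \<beta>\<bar> \<le> B"
    and close: "\<forall>g\<in>Gr. \<forall>\<beta>\<in>P g. \<bar>f \<beta> - f (e g)\<bar> \<le> \<epsilon>"
  shows "\<bar>(\<integral>\<beta>. f \<beta> \<partial>G) - (\<Sum>g\<in>Gr. measure G (P g) * f (e g))\<bar> \<le> \<epsilon>"
proof -
  interpret prob_space G by (rule G(1))
  have fm: "f \<in> borel_measurable G" by (subst measurable_cong_sets[OF G(2) refl]) (rule f)
  have int: "integrable G f" by (rule integrable_const_bound[where B=B]) (use bnd fm in auto)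
  have "\<bar>(\<integral>\<beta>. f \<beta> \<partial>G) - (\<Sum>g\<in>Gr. measure G (P g) * f (e g))\<bar>
      \<le> (\<Sum>g\<in>Gr. \<bar>(\<integral>\<beta>. f \<beta> * indicator (P g) \<beta> \<partial>G) - measure G (P g) * f (e g)\<bar>)"
    unfolding integral_eq_sum_partition[OF G fin meas disj cov int] sum_subtractf[symmetric]
    by (rule sum_abs)
  also have "\<dots> \<le> (\<Sum>g\<in>Gr. \<epsilon> * measure G (P g))"
    using meas G(2) close by (intro sum_mono integral_indicator_approx[OF G(1) _ int]) auto
  also have "\<dots> = \<epsilon>"
    using measure_partition_sum_eq_one[OF G fin meas disj cov] by (simp add: sum_distrib_left[symmetric])
  finally show ?thesis .
qed

section \<open>Local polynomial approximation of the Gaussian kernel\<close>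

lemma std_normal_density_tail_le:
  assumes "1 \<le> T" "4 * T + 4 \<le> v\<^sup>2"
  shows "std_normal_density v \<le> exp (- T) / 8"
proof -
  have "std_normal_density v \<le> exp (- v\<^sup>2 / 2)" by (rule std_normal_density_le_exp)
  also have "\<dots> \<le> exp (- T + - 3)" using assms by simp
  also have "\<dots> = exp (- T) * exp (- 3)" by (rule exp_add)
  also have "\<dots> \<le> exp (- T) * (1 / 8)" using exp_neg_three_le by (intro mult_left_mono) auto
  finally show ?thesis by simp
qed

lemma std_normal_density_taylor_error:
  "\<bar>std_normal_density v - (1 / sqrt (2 * pi)) * (\<Sum>m<k. (- (v\<^sup>2 / 2)) ^ m / fact m)\<bar>
     \<le> exp (2 * v\<^sup>2 - real k)"
proof -
  define E where "E = \<bar>exp (- (v\<^sup>2 / 2)) - (\<Sum>m<k. (- (v\<^sup>2 / 2)) ^ m / fact m)\<bar>"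
  have "\<bar>std_normal_density v - (1 / sqrt (2 * pi)) * (\<Sum>m<k. (- (v\<^sup>2 / 2)) ^ m / fact m)\<bar>
      = E / sqrt (2 * pi)"
    by (simp add: E_def std_normal_density_def diff_divide_distrib[symmetric] abs_divide)
  also have "\<dots> \<le> E / 1"
    using sqrt_two_pi_ge_one by (intro divide_left_mono) (auto simp: E_def)
  also have "\<dots> \<le> exp (4 * (v\<^sup>2 / 2) - real k)"
    unfolding E_def div_by_1 by (rule exp_neg_taylor_error) simp
  finally show ?thesis by simp
qed

lemma poly_deg_le_gaussian_taylor:
  assumes "poly_deg_le d v"
  shows "poly_deg_le (2 * k * d)
           (\<lambda>\<beta>. (1 / sqrt (2 * pi)) * (\<Sum>m<k. (- ((v \<beta>)\<^sup>2 / 2)) ^ m / fact m))"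
proof -
  have "poly_deg_le (d + d) (\<lambda>\<beta>. (- 1 / 2) * (v \<beta> * v \<beta>))"
    by (intro poly_deg_le_cmult poly_deg_le_mult assms)
  moreover have "(\<lambda>\<beta>. (- 1 / 2) * (v \<beta> * v \<beta>)) = (\<lambda>\<beta>. - ((v \<beta>)\<^sup>2 / 2))"
    by (simp add: fun_eq_iff power2_eq_square)
  ultimately have square: "poly_deg_le (d + d) (\<lambda>\<beta>. - ((v \<beta>)\<^sup>2 / 2))" by simp
  have "poly_deg_le (2 * k * d) (\<lambda>\<beta>. (- ((v \<beta>)\<^sup>2 / 2)) ^ m / fact m)" if "m < k" for m
  proof -
    have "(d + d) * m \<le> (d + d) * k" using that by simp
    then have "(d + d) * m \<le> 2 * k * d" by (simp add: algebra_simps)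
    then have "poly_deg_le (2 * k * d) (\<lambda>\<beta>. (1 / fact m) * (- ((v \<beta>)\<^sup>2 / 2)) ^ m)"
      by (intro poly_deg_le_cmult poly_deg_le_mono[OF poly_deg_le_power[OF square]])
    then show ?thesis by simp
  qed
  then show ?thesis by (intro poly_deg_le_cmult poly_deg_le_sum) auto
qed

text \<open>Far out in the tail the approximating polynomial is \<open>0\<close>; elsewhere it is a Taylor
  polynomial of \<open>exp\<close> of order proportional to \<open>T\<close>.\<close>

lemma std_normal_density_local_poly_approx:
  assumes T: "1 \<le> T" and v: "poly_deg_le d v" and k: "420 * T \<le> real k"
  shows "\<exists>P. poly_deg_le (2 * k * d) P \<and>
    (\<forall>\<beta>. \<bar>v \<beta> - u\<bar> \<le> 2 * sqrt (2 * (ln 3 + T))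
       \<longrightarrow> \<bar>std_normal_density (v \<beta>) - P \<beta>\<bar> \<le> exp (- T) / 8)"
proof -
  define a where "a = 2 * sqrt (2 * (ln 3 + T))"
  define B where "B = sqrt (4 * T + 4)"
  have ln3: "0 \<le> ln (3::real)" "ln (3::real) \<le> 2" using ln_le_minus_one[of 3] by simp_all
  have a: "0 \<le> a" "a\<^sup>2 = 8 * (ln 3 + T)" using T ln3 by (simp_all add: a_def power_mult_distrib)
  have B: "0 \<le> B" "B\<^sup>2 = 4 * T + 4" using T by (simp_all add: B_def)
  show ?thesis
  proof (cases "B + a \<le> \<bar>u\<bar>")
    case True
    have "\<bar>std_normal_density (v \<beta>) - 0\<bar> \<le> exp (- T) / 8" if "\<bar>v \<beta> - u\<bar> \<le> a" for \<beta>
    proof -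
      have "B \<le> \<bar>v \<beta>\<bar>" using that True by linarith
      then have "B\<^sup>2 \<le> (v \<beta>)\<^sup>2" using B(1) by (metis abs_le_square_iff abs_of_nonneg)
      then show ?thesis using std_normal_density_tail_le[OF T] B(2) by simp
    qed
    then show ?thesis using poly_deg_le_const unfolding a_def by blast
  next
    case False
    let ?P = "\<lambda>\<beta>. (1 / sqrt (2 * pi)) * (\<Sum>m<k. (- ((v \<beta>)\<^sup>2 / 2)) ^ m / fact m)"
    have "\<bar>std_normal_density (v \<beta>) - ?P \<beta>\<bar> \<le> exp (- T) / 8" if "\<bar>v \<beta> - u\<bar> \<le> a" for \<beta>
    proof -
      have "\<bar>v \<beta>\<bar> \<le> B + 2 * a" using that False by linarith
      then have "(v \<beta>)\<^sup>2 \<le> (B + 2 * a)\<^sup>2" using a(1) B(1) by (metis abs_le_square_iff abs_of_nonneg add_nonneg_nonneg mult_nonneg_nonneg zero_le_numeral)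
      also have "\<dots> \<le> 2 * B\<^sup>2 + 2 * (2 * a)\<^sup>2"
        using zero_le_power2[of "B - 2 * a"] by (simp add: power2_eq_square algebra_simps)
      finally have "2 * (v \<beta>)\<^sup>2 - real k \<le> - T + - 3" using a(2) B(2) ln3 T k by simp
      then have "exp (2 * (v \<beta>)\<^sup>2 - real k) \<le> exp (- T) * exp (- 3)" by (simp add: exp_add[symmetric])
      also have "\<dots> \<le> exp (- T) * (1 / 8)" using exp_neg_three_le by (intro mult_left_mono) auto
      finally show ?thesis using std_normal_density_taylor_error[of "v \<beta>" k] by simp
    qed
    then show ?thesis using poly_deg_le_gaussian_taylor[OF v] unfolding a_def by blast
  qed
qed

section \<open>Grids and moment matching\<close>

definition grid_index :: "real \<Rightarrow> real^'p::finite \<Rightarrow> ('p \<Rightarrow> int)" where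
  "grid_index h \<beta> = (\<lambda>i. \<lfloor>\<beta> $ i / h\<rfloor>)"

lemma grid_index_eq_imp_norm_le:
  fixes \<beta> \<beta>' :: "real^'p::finite"
  assumes h: "0 < h" and eq: "grid_index h \<beta> = grid_index h \<beta>'"
  shows "norm (\<beta> - \<beta>') \<le> real CARD('p) * h"
proof -
  have "\<bar>\<beta> $ i - \<beta>' $ i\<bar> \<le> h" for i
  proof -
    have "\<lfloor>\<beta> $ i / h\<rfloor> = \<lfloor>\<beta>' $ i / h\<rfloor>" using fun_cong[OF eq, of i] by (simp add: grid_index_def)
    then have "\<bar>\<beta> $ i / h - \<beta>' $ i / h\<bar> < 1" by linarith
    then have "\<bar>\<beta> $ i - \<beta>' $ i\<bar> / h < 1" using h by (simp add: diff_divide_distrib[symmetric] abs_divide)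
    then show ?thesis using h by (simp add: divide_less_eq)
  qed
  then have "(\<Sum>i\<in>UNIV. \<bar>(\<beta> - \<beta>') $ i\<bar>) \<le> (\<Sum>i\<in>(UNIV::'p set). h)" by (intro sum_mono) simp
  then show ?thesis using norm_le_l1_cart[of "\<beta> - \<beta>'"] by simp
qed

lemma grid_index_cball_subset:
  fixes c :: "real^'p::finite"
  assumes h: "0 < h"
  shows "grid_index h ` cball c \<rho> \<subseteq> Pi\<^sub>E UNIV (\<lambda>i. {\<lfloor>(c $ i - \<rho>) / h\<rfloor> .. \<lfloor>(c $ i + \<rho>) / h\<rfloor>})"
proof
  fix g assume "g \<in> grid_index h ` cball c \<rho>"
  then obtain \<beta> where \<beta>: "\<beta> \<in> cball c \<rho>" "g = grid_index h \<beta>" by auto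
  have coord: "\<bar>(c - \<beta>) $ i\<bar> \<le> \<rho>" for i
    using component_le_norm_cart[of "c - \<beta>" i] \<beta>(1) by (simp add: dist_norm)
  have "c $ i - \<rho> \<le> \<beta> $ i \<and> \<beta> $ i \<le> c $ i + \<rho>" for i
    using coord[of i] by (auto simp: abs_le_iff)
  then have "(c $ i - \<rho>) / h \<le> \<beta> $ i / h \<and> \<beta> $ i / h \<le> (c $ i + \<rho>) / h" for i
    using h by (simp add: divide_right_mono)
  then have "\<lfloor>(c $ i - \<rho>) / h\<rfloor> \<le> g i \<and> g i \<le> \<lfloor>(c $ i + \<rho>) / h\<rfloor>" for i
    unfolding \<beta>(2) grid_index_def by (auto intro: floor_mono)
  then show "g \<in> Pi\<^sub>E UNIV (\<lambda>i. {\<lfloor>(c $ i - \<rho>) / h\<rfloor> .. \<lfloor>(c $ i + \<rho>) / h\<rfloor>})" by auto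
qed

lemma finite_grid_index_cball:
  fixes c :: "real^'p::finite"
  assumes "0 < h"
  shows "finite (grid_index h ` cball c \<rho>)"
  by (rule finite_subset[OF grid_index_cball_subset[OF assms]]) (auto intro: finite_PiE)

lemma card_grid_index_cball_le:
  fixes c :: "real^'p::finite"
  assumes h: "0 < h" and \<rho>: "0 \<le> \<rho>"
  shows "real (card (grid_index h ` cball c \<rho>)) \<le> (2 * \<rho> / h + 2) ^ CARD('p)"
proof -
  define lo where "lo i = \<lfloor>(c $ i - \<rho>) / h\<rfloor>" for i
  define hi where "hi i = \<lfloor>(c $ i + \<rho>) / h\<rfloor>" for i
  have "card (grid_index h ` cball c \<rho>) \<le> card (Pi\<^sub>E (UNIV::'p set) (\<lambda>i. {lo i .. hi i}))"
    using grid_index_cball_subset[OF h, of c \<rho>]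
    by (intro card_mono) (auto intro: finite_PiE simp: lo_def hi_def)
  also have "\<dots> = (\<Prod>i\<in>UNIV. nat (hi i - lo i + 1))" by (simp add: card_PiE)
  finally have "real (card (grid_index h ` cball c \<rho>)) \<le> real (\<Prod>i\<in>UNIV. nat (hi i - lo i + 1))"
    by (simp only: of_nat_le_iff)
  also have "\<dots> = (\<Prod>i\<in>UNIV. real (nat (hi i - lo i + 1)))" by (rule of_nat_prod)
  also have "\<dots> \<le> (\<Prod>i\<in>(UNIV::'p set). 2 * \<rho> / h + 2)"
  proof (rule prod_mono)
    fix i :: 'p
    have "of_int (hi i) \<le> (c $ i + \<rho>) / h" "(c $ i - \<rho>) / h < of_int (lo i) + 1"
      unfolding hi_def lo_def by linarith+
    moreover have "(c $ i + \<rho>) / h - (c $ i - \<rho>) / h = 2 * \<rho> / h"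
      by (simp add: diff_divide_distrib[symmetric])
    ultimately have "real_of_int (hi i - lo i + 1) \<le> 2 * \<rho> / h + 2" by simp
    then show "0 \<le> real (nat (hi i - lo i + 1)) \<and> real (nat (hi i - lo i + 1)) \<le> 2 * \<rho> / h + 2"
      using h \<rho> by (cases "hi i - lo i + 1 \<ge> 0") auto
  qed
  also have "\<dots> = (2 * \<rho> / h + 2) ^ CARD('p)" by simp
  finally show ?thesis .
qed

lemma abs_weighted_sum_le:
  fixes w e :: "'g \<Rightarrow> real"
  assumes "\<forall>g\<in>A. 0 \<le> w g" "\<forall>g\<in>A. \<bar>e g\<bar> \<le> \<epsilon>"
  shows "\<bar>\<Sum>g\<in>A. w g * e g\<bar> \<le> \<epsilon> * (\<Sum>g\<in>A. w g)"
proof -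
  have "\<bar>\<Sum>g\<in>A. w g * e g\<bar> \<le> (\<Sum>g\<in>A. w g * \<bar>e g\<bar>)"
    using sum_abs[of "\<lambda>g. w g * e g" A] assms(1) by (simp add: abs_mult)
  also have "\<dots> \<le> (\<Sum>g\<in>A. w g * \<epsilon>)" using assms by (intro sum_mono mult_left_mono) auto
  also have "\<dots> = \<epsilon> * (\<Sum>g\<in>A. w g)" by (metis sum_distrib_right mult.commute)
  finally show ?thesis .
qed

lemma moment_matching_error:
  fixes pt :: "'g \<Rightarrow> real^'p::finite"
  assumes wA: "\<forall>g\<in>A. 0 \<le> w g" and wB: "\<forall>g\<in>B. 0 \<le> w' g"
    and moments: "\<forall>\<alpha>\<in>multi_indices D.
      (\<Sum>g\<in>B. w' g * monomial_vec \<alpha> (pt g)) = (\<Sum>g\<in>A. w g * monomial_vec \<alpha> (pt g))"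
    and P: "poly_deg_le D P" and close: "\<forall>g\<in>A \<union> B. \<bar>\<phi> (pt g) - P (pt g)\<bar> \<le> \<epsilon>"
  shows "(\<Sum>g\<in>B. w' g) = (\<Sum>g\<in>A. w g)"
    and "\<bar>(\<Sum>g\<in>A. w g * \<phi> (pt g)) - (\<Sum>g\<in>B. w' g * \<phi> (pt g))\<bar> \<le> 2 * \<epsilon> * (\<Sum>g\<in>A. w g)"
proof -
  show mass: "(\<Sum>g\<in>B. w' g) = (\<Sum>g\<in>A. w g)"
    using bspec[OF moments zero_in_multi_indices] by simp
  obtain c where c: "\<And>\<beta>. P \<beta> = (\<Sum>\<alpha>\<in>multi_indices D. c \<alpha> * monomial_vec \<alpha> \<beta>)"
    using P by (auto simp: poly_deg_le_iff)
  have P_sum: "(\<Sum>g\<in>X. v g * P (pt g)) = (\<Sum>\<alpha>\<in>multi_indices D. c \<alpha> * (\<Sum>g\<in>X. v g * monomial_vec \<alpha> (pt g)))"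
    for X v
  proof -
    have "(\<Sum>g\<in>X. v g * P (pt g)) = (\<Sum>g\<in>X. \<Sum>\<alpha>\<in>multi_indices D. c \<alpha> * (v g * monomial_vec \<alpha> (pt g)))"
      by (simp add: c sum_distrib_left mult_ac)
    also have "\<dots> = (\<Sum>\<alpha>\<in>multi_indices D. c \<alpha> * (\<Sum>g\<in>X. v g * monomial_vec \<alpha> (pt g)))"
      by (subst sum.swap) (simp add: sum_distrib_left)
    finally show ?thesis .
  qed
  have "(\<Sum>g\<in>B. w' g * P (pt g)) = (\<Sum>g\<in>A. w g * P (pt g))"
    unfolding P_sum using moments by (intro sum.cong refl) auto
  then have "(\<Sum>g\<in>A. w g * \<phi> (pt g)) - (\<Sum>g\<in>B. w' g * \<phi> (pt g))
      = (\<Sum>g\<in>A. w g * (\<phi> (pt g) - P (pt g))) - (\<Sum>g\<in>B. w' g * (\<phi> (pt g) - P (pt g)))"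
    by (simp add: right_diff_distrib sum_subtractf)
  also have "\<bar>\<dots>\<bar> \<le> \<epsilon> * (\<Sum>g\<in>A. w g) + \<epsilon> * (\<Sum>g\<in>B. w' g)"
  proof -
    have "\<bar>\<Sum>g\<in>A. w g * (\<phi> (pt g) - P (pt g))\<bar> \<le> \<epsilon> * (\<Sum>g\<in>A. w g)"
      using close by (intro abs_weighted_sum_le wA) auto
    moreover have "\<bar>\<Sum>g\<in>B. w' g * (\<phi> (pt g) - P (pt g))\<bar> \<le> \<epsilon> * (\<Sum>g\<in>B. w' g)"
      using close by (intro abs_weighted_sum_le wB) auto
    ultimately show ?thesis by linarith
  qed
  finally show "\<bar>(\<Sum>g\<in>A. w g * \<phi> (pt g)) - (\<Sum>g\<in>B. w' g * \<phi> (pt g))\<bar> \<le> 2 * \<epsilon> * (\<Sum>g\<in>A. w g)"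
    by (simp add: mass)
qed

lemma sum_padded_enumeration:
  fixes c m :: nat and w :: "'g \<Rightarrow> real" and \<phi> :: "'b \<Rightarrow> real" and pt :: "'g \<Rightarrow> 'b"
  assumes h: "bij_betw h {0..<c} F" and cm: "c \<le> m"
  shows "(\<Sum>i<m. (if i < c then w (h i) else 0) * \<phi> (if i < c then pt (h i) else b))
           = (\<Sum>g\<in>F. w g * \<phi> (pt g))"
proof -
  let ?f = "\<lambda>i. (if i < c then w (h i) else 0) * \<phi> (if i < c then pt (h i) else b)"
  have "(\<Sum>i<m. ?f i) = (\<Sum>i\<in>{0..<m}. ?f i)" by (simp add: atLeast0LessThan)
  also have "\<dots> = (\<Sum>i\<in>{0..<c}. ?f i) + (\<Sum>i\<in>{c..<m}. ?f i)"
    by (rule sum.atLeastLessThan_concat[symmetric]) (use cm in auto)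
  also have "(\<Sum>i\<in>{c..<m}. ?f i) = 0" by (rule sum.neutral) auto
  also have "(\<Sum>i\<in>{0..<c}. ?f i) = (\<Sum>i\<in>{0..<c}. w (h i) * \<phi> (pt (h i)))" by (rule sum.cong) auto
  also have "\<dots> = (\<Sum>g\<in>F. w g * \<phi> (pt g))" by (rule sum.reindex_bij_betw[OF h])
  finally show ?thesis by simp
qed

lemma floor_quantization:
  fixes a \<nu> :: real
  assumes "0 \<le> a" "0 < \<nu>"
  shows "real (nat \<lfloor>a / \<nu>\<rfloor>) \<le> a / \<nu>"
    and "0 \<le> a - \<nu> * real (nat \<lfloor>a / \<nu>\<rfloor>)" "a - \<nu> * real (nat \<lfloor>a / \<nu>\<rfloor>) \<le> \<nu>"
proof -
  have nat_floor: "real (nat \<lfloor>a / \<nu>\<rfloor>) = real_of_int \<lfloor>a / \<nu>\<rfloor>" using assms by simp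
  show "real (nat \<lfloor>a / \<nu>\<rfloor>) \<le> a / \<nu>" unfolding nat_floor by (rule of_int_floor_le)
  then show "0 \<le> a - \<nu> * real (nat \<lfloor>a / \<nu>\<rfloor>)" using assms by (simp add: le_divide_eq mult.commute)
  have "a / \<nu> < real (nat \<lfloor>a / \<nu>\<rfloor>) + 1" unfolding nat_floor by (rule real_of_int_floor_add_one_gt)
  then show "a - \<nu> * real (nat \<lfloor>a / \<nu>\<rfloor>) \<le> \<nu>" using assms by (simp add: divide_less_eq algebra_simps)
qed

lemma covering_number_le_card:
  assumes "finite F" "\<forall>t\<in>T. \<exists>s\<in>F. d s t \<le> ereal \<eta>"
  shows "covering_number d \<eta> T \<le> ereal (real (card F))"
  unfolding covering_number_def by (rule INF_lower) (use assms in auto)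

lemma covering_number_nonneg: "0 \<le> covering_number d \<eta> T"
  unfolding covering_number_def by (rule INF_greatest) simp

lemma covering_number_attained:
  fixes K :: "'a::metric_space set"
  assumes K: "compact K" and \<rho>: "0 < \<rho>"
  shows "\<exists>S. finite S \<and> (\<forall>t\<in>K. \<exists>s\<in>S. dist s t \<le> \<rho>) \<and>
     covering_number (\<lambda>a b. ereal (dist a b)) \<rho> K = ereal (real (card S))"
proof -
  define Covers where "Covers = {S. finite S \<and> (\<forall>t\<in>K. \<exists>s\<in>S. ereal (dist s t) \<le> ereal \<rho>)}"
  obtain C where C: "C \<subseteq> K" "finite C" "K \<subseteq> (\<Union>t\<in>C. ball t \<rho>)"
    using compactE_image[OF K, of K "\<lambda>t. ball t \<rho>"] \<rho> by force
  then have "C \<in> Covers" unfolding Covers_def by (force simp: less_imp_le)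
  then have ex: "\<exists>n. \<exists>S\<in>Covers. card S = n" by blast
  define n0 where "n0 = (LEAST n. \<exists>S\<in>Covers. card S = n)"
  obtain S where S: "S \<in> Covers" "card S = n0" using LeastI_ex[OF ex] unfolding n0_def by blast
  have "n0 \<le> card S'" if "S' \<in> Covers" for S' unfolding n0_def using that by (intro Least_le) blast
  then have "(INF S'\<in>Covers. ereal (real (card S'))) = ereal (real n0)"
    using S by (intro antisym INF_greatest) (auto intro: INF_lower2)
  then show ?thesis using S by (auto simp: covering_number_def Covers_def)
qed

lemma lipschitz_of_SUP_lip_const:
  assumes L: "(SUP x\<in>S0. lip_const r K x) = ereal L" and x: "x \<in> S0" and b: "b1 \<in> K" "b2 \<in> K"
  shows "\<bar>r x b1 - r x b2\<bar> \<le> L * norm (b1 - b2)"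
proof (cases "b1 = b2")
  case False
  have "ereal (\<bar>r x b1 - r x b2\<bar> / norm (b1 - b2)) \<le> lip_const r K x"
    unfolding lip_const_def using b False by (intro SUP_upper2[of "(b1, b2)"]) auto
  also have "\<dots> \<le> ereal L" unfolding L[symmetric] using x by (rule SUP_upper)
  finally show ?thesis using False by (simp add: divide_le_eq mult.commute)
qed simp

lemma nonempty_of_SUP_lip_const_pos:
  assumes "0 < (SUP x\<in>S0. lip_const r K x)"
  shows "K \<noteq> {}"
proof
  assume "K = {}"
  then have "(SUP x\<in>S0. lip_const r K x) = -\<infinity>" by (cases "S0 = {}") (simp_all add: lip_const_def bot_ereal_def)
  then show False using assms by simp
qed

section \<open>A finite net for Gaussian mixtures\<close>

definition cover_const :: "nat \<Rightarrow> real" where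
  "cover_const p = (real p * (ln (26 * real p) + 2) + 6) * 843 ^ p"

lemma cover_const_factor_nonneg: "0 \<le> real p * (ln (26 * real p) + 2) + 6"
proof (cases "p = 0")
  case False
  then have "0 \<le> ln (26 * real p)" by simp
  then show ?thesis by simp
qed simp

lemma cover_const_nonneg: "0 \<le> cover_const p"
  using cover_const_factor_nonneg[of p] by (simp add: cover_const_def)

locale mixture_net =
  fixes K :: "(real^'p::finite) set" and S0 :: "'x set" and \<sigma> \<eta> L :: real
    and r :: "'x \<Rightarrow> real^'p \<Rightarrow> real" and \<zeta> :: nat and S :: "(real^'p) set"
  assumes compact_K: "compact K" and K_nonempty: "K \<noteq> {}"
    and sigma_pos: "0 < \<sigma>" and eta_pos: "0 < \<eta>" and sigma_eta_small: "\<sigma> * \<eta> < exp (-1)"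
    and L_pos: "0 < L" and poly_r: "\<And>x. poly_deg_le \<zeta> (r x)" and zeta_pos: "1 \<le> \<zeta>"
    and lipschitz_r: "\<And>x b1 b2. x \<in> S0 \<Longrightarrow> b1 \<in> K \<Longrightarrow> b2 \<in> K \<Longrightarrow>
      \<bar>r x b1 - r x b2\<bar> \<le> L * norm (b1 - b2)"
    and finite_S: "finite S"
    and S_covers: "\<And>t. t \<in> K \<Longrightarrow> \<exists>s\<in>S. dist s t \<le> \<sigma> / L * sqrt (2 * ln (3 / (\<sigma> * \<eta>)))"
begin

definition log_scale :: real where
  "log_scale = ln (1 / (\<sigma> * \<eta>))"

definition radius :: real where
  "radius = \<sigma> / L * sqrt (2 * ln (3 / (\<sigma> * \<eta>)))"

text \<open>This step makes grid cells of diameter at most \<open>\<eta> \<sigma>\<^sup>2 / (4 L)\<close>, over which the kernel varies by at most \<open>\<eta> / 4\<close>.\<close>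

definition grid_step :: real where
  "grid_step = \<eta> * \<sigma>\<^sup>2 / (4 * L) / real CARD('p)"

definition grid_cells :: "('p \<Rightarrow> int) set" where
  "grid_cells = grid_index grid_step ` K"

definition cell_set :: "('p \<Rightarrow> int) \<Rightarrow> (real^'p) set" where
  "cell_set g = K \<inter> {\<beta>. grid_index grid_step \<beta> = g}"

definition grid_point :: "('p \<Rightarrow> int) \<Rightarrow> real^'p" where
  "grid_point g = (SOME \<beta>. \<beta> \<in> K \<and> grid_index grid_step \<beta> = g)"

definition center :: "('p \<Rightarrow> int) \<Rightarrow> real^'p" where
  "center g = (SOME s. s \<in> S \<and> dist s (grid_point g) \<le> radius)"

definition centers :: "(real^'p) set" where
  "centers = center ` grid_cells"

definition cells_at :: "real^'p \<Rightarrow> ('p \<Rightarrow> int) set" where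
  "cells_at j = {g \<in> grid_cells. center g = j}"

definition points_at :: "real^'p \<Rightarrow> (real^'p) set" where
  "points_at j = grid_point ` cells_at j"

definition anchor :: "real^'p \<Rightarrow> real^'p" where
  "anchor j = grid_point (SOME g. g \<in> cells_at j)"

definition taylor_order :: nat where
  "taylor_order = nat \<lceil>420 * log_scale\<rceil>"

definition moment_degree :: nat where
  "moment_degree = 2 * taylor_order * \<zeta>"

definition n_moments :: nat where
  "n_moments = card (multi_indices moment_degree :: ('p \<Rightarrow> nat) set)"

text \<open>Each center carries \<open>n_moments\<close> atom slots, enough for Caratheodory reduction.\<close>

definition atoms :: "((real^'p) \<times> nat) set" where
  "atoms = centers \<times> {..<n_moments}"

definition quantum :: real where
  "quantum = \<sigma> * \<eta> / 4 / real (card atoms)"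

definition n_quanta :: nat where
  "n_quanta = nat \<lfloor>1 / quantum\<rfloor>"

definition kernel :: "'x \<Rightarrow> real \<Rightarrow> real^'p \<Rightarrow> real" where
  "kernel x y \<beta> = (1 / \<sigma>) * std_normal_density ((y - r x \<beta>) / \<sigma>)"

definition atom_mixture ::
    "((real^'p) \<times> nat \<Rightarrow> real^'p) \<Rightarrow> ((real^'p) \<times> nat \<Rightarrow> real) \<Rightarrow> 'x \<Rightarrow> real \<Rightarrow> real" where
  "atom_mixture z w x y = (\<Sum>q\<in>atoms. w q * kernel x y (z q))"

definition atom_locations :: "((real^'p) \<times> nat \<Rightarrow> real^'p) set" where
  "atom_locations = Pi\<^sub>E atoms (\<lambda>q. points_at (fst q))"

definition atom_counts :: "((real^'p) \<times> nat \<Rightarrow> nat) set" where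
  "atom_counts = {\<kappa> \<in> Pi\<^sub>E atoms (\<lambda>_. {..n_quanta}). (\<Sum>q\<in>atoms. \<kappa> q) \<le> n_quanta}"

definition net :: "('x \<Rightarrow> real \<Rightarrow> real) set" where
  "net = (\<lambda>(z, \<kappa>). atom_mixture z (\<lambda>q. quantum * real (\<kappa> q))) ` (atom_locations \<times> atom_counts)"

lemma sigma_eta_pos: "0 < \<sigma> * \<eta>"
  using sigma_pos eta_pos by simp

lemma log_scale_gt_one: "1 < log_scale"
proof -
  have "exp 1 < 1 / (\<sigma> * \<eta>)"
    using sigma_eta_small sigma_eta_pos by (simp add: exp_minus field_simps)
  then have "ln (exp 1) < ln (1 / (\<sigma> * \<eta>))" using sigma_eta_pos by (subst ln_less_cancel_iff) auto
  then show ?thesis by (simp add: log_scale_def)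
qed

lemma exp_log_scale: "exp log_scale = 1 / (\<sigma> * \<eta>)"
proof -
  have "0 < 1 / (\<sigma> * \<eta>)" using sigma_pos eta_pos by simp
  then show ?thesis unfolding log_scale_def by simp
qed

lemma exp_neg_log_scale: "exp (- log_scale) = \<sigma> * \<eta>"
  using exp_log_scale by (simp add: exp_minus)

lemma ln_three_div: "ln (3 / (\<sigma> * \<eta>)) = ln 3 + log_scale"
  using sigma_pos eta_pos by (simp add: log_scale_def ln_div)

lemma radius_pos: "0 < radius"
proof -
  have "0 < ln (3 / (\<sigma> * \<eta>))"
    unfolding ln_three_div by (rule add_pos_pos) (use log_scale_gt_one in auto)
  then show ?thesis using sigma_pos L_pos by (simp add: radius_def)
qed

lemma grid_step_pos: "0 < grid_step"
  using sigma_pos eta_pos L_pos by (simp add: grid_step_def)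

lemma finite_grid_cells: "finite grid_cells"
proof -
  obtain c R where "K \<subseteq> cball c R"
    using compact_imp_bounded[OF compact_K] bounded_subset_cball by blast
  then have "grid_cells \<subseteq> grid_index grid_step ` cball c R" by (auto simp: grid_cells_def)
  then show ?thesis using finite_grid_index_cball[OF grid_step_pos] finite_subset by blast
qed

lemma grid_point_spec: assumes "g \<in> grid_cells"
  shows "grid_point g \<in> K" "grid_index grid_step (grid_point g) = g"
proof -
  have "\<exists>\<beta>. \<beta> \<in> K \<and> grid_index grid_step \<beta> = g" using assms by (auto simp: grid_cells_def)
  then have "grid_point g \<in> K \<and> grid_index grid_step (grid_point g) = g"
    unfolding grid_point_def by (rule someI_ex)
  then show "grid_point g \<in> K" "grid_index grid_step (grid_point g) = g" by auto
qed

lemma center_spec: assumes "g \<in> grid_cells"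
  shows "center g \<in> S" "dist (center g) (grid_point g) \<le> radius"
proof -
  have "\<exists>s. s \<in> S \<and> dist s (grid_point g) \<le> radius"
    using S_covers grid_point_spec(1)[OF assms] by (auto simp: radius_def)
  then have "center g \<in> S \<and> dist (center g) (grid_point g) \<le> radius"
    unfolding center_def by (rule someI_ex)
  then show "center g \<in> S" "dist (center g) (grid_point g) \<le> radius" by auto
qed

lemma finite_centers: "finite centers"
  using finite_grid_cells by (simp add: centers_def)

lemma card_centers_le: "card centers \<le> card S"
  using center_spec(1) by (intro card_mono[OF finite_S]) (auto simp: centers_def)

lemma centers_nonempty: "centers \<noteq> {}"
  using K_nonempty by (simp add: centers_def grid_cells_def)

lemma finite_cells_at: "finite (cells_at j)"
  using finite_grid_cells by (simp add: cells_at_def)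

lemma cells_at_nonempty: "j \<in> centers \<Longrightarrow> cells_at j \<noteq> {}"
  by (auto simp: centers_def cells_at_def)

lemma anchor_in_points_at: assumes "j \<in> centers" shows "anchor j \<in> points_at j"
proof -
  have "(SOME g. g \<in> cells_at j) \<in> cells_at j"
    using cells_at_nonempty[OF assms] by (simp add: some_in_eq)
  then show ?thesis by (simp add: anchor_def points_at_def)
qed

lemma grid_point_near_anchor:
  assumes j: "j \<in> centers" and g: "g \<in> cells_at j"
  shows "norm (grid_point g - anchor j) \<le> 2 * radius"
proof -
  obtain g' where g': "g' \<in> cells_at j" "anchor j = grid_point g'"
    using anchor_in_points_at[OF j] by (auto simp: points_at_def)
  have "dist (grid_point g) j \<le> radius" using g center_spec(2)[of g] by (auto simp: cells_at_def dist_commute)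
  moreover have "dist j (anchor j) \<le> radius" using g' center_spec(2)[of g'] by (auto simp: cells_at_def)
  ultimately have "dist (grid_point g) (anchor j) \<le> radius + radius"
    using dist_triangle[of "grid_point g" "anchor j" j] by linarith
  then show ?thesis by (simp add: dist_norm)
qed

lemma card_cells_at_le:
  assumes "j \<in> centers"
  shows "real (card (cells_at j)) \<le> (2 * radius / grid_step + 2) ^ CARD('p)"
proof -
  have "cells_at j \<subseteq> grid_index grid_step ` cball j radius"
  proof
    fix g assume "g \<in> cells_at j"
    then have g: "g \<in> grid_cells" "center g = j" by (auto simp: cells_at_def)
    then have "grid_point g \<in> cball j radius" using center_spec(2)[OF g(1)] by simp
    then show "g \<in> grid_index grid_step ` cball j radius"
      using grid_point_spec(2)[OF g(1)] by (metis image_eqI)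
  qed
  then have "card (cells_at j) \<le> card (grid_index grid_step ` cball j radius)"
    by (rule card_mono[OF finite_grid_index_cball[OF grid_step_pos]])
  then have "real (card (cells_at j)) \<le> real (card (grid_index grid_step ` cball j radius))" by simp
  also have "\<dots> \<le> (2 * radius / grid_step + 2) ^ CARD('p)"
    using grid_step_pos radius_pos by (intro card_grid_index_cball_le) auto
  finally show ?thesis .
qed

lemma finite_atoms: "finite atoms"
  using finite_centers by (simp add: atoms_def)

lemma card_atoms: "card atoms = card centers * n_moments"
  by (simp add: atoms_def card_cartesian_product)

lemma card_atoms_pos: "1 \<le> card atoms"
proof -
  have "1 \<le> card centers" using finite_centers centers_nonempty by (simp add: Suc_le_eq card_gt_0_iff)
  moreover have "1 \<le> n_moments"
    using finite_multi_indices zero_in_multi_indices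
    by (auto simp: n_moments_def Suc_le_eq card_gt_0_iff)
  ultimately show ?thesis using mult_le_mono[of 1 _ 1] by (simp add: card_atoms)
qed

lemma quantum_pos: "0 < quantum"
  using sigma_eta_pos card_atoms_pos by (simp add: quantum_def)

end

context mixture_net
begin

lemma abs_kernel_le: "\<bar>kernel x y \<beta>\<bar> \<le> 1 / \<sigma>"
  using sigma_pos std_normal_density_le_one[of "(y - r x \<beta>) / \<sigma>"]
  by (simp add: kernel_def divide_le_eq)

lemma kernel_lipschitz:
  assumes "x \<in> S0" "\<beta> \<in> K" "\<beta>' \<in> K"
  shows "\<bar>kernel x y \<beta> - kernel x y \<beta>'\<bar> \<le> L * norm (\<beta> - \<beta>') / \<sigma>\<^sup>2"
proof -
  have "\<bar>kernel x y \<beta> - kernel x y \<beta>'\<bar>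
      = (1 / \<sigma>) * \<bar>std_normal_density ((y - r x \<beta>) / \<sigma>) - std_normal_density ((y - r x \<beta>') / \<sigma>)\<bar>"
    using sigma_pos unfolding kernel_def right_diff_distrib[symmetric] abs_mult by simp
  also have "\<dots> \<le> (1 / \<sigma>) * \<bar>(y - r x \<beta>) / \<sigma> - (y - r x \<beta>') / \<sigma>\<bar>"
    using sigma_pos by (intro mult_left_mono std_normal_density_lipschitz) auto
  also have "\<bar>(y - r x \<beta>) / \<sigma> - (y - r x \<beta>') / \<sigma>\<bar> = \<bar>r x \<beta> - r x \<beta>'\<bar> / \<sigma>"
    using sigma_pos by (simp add: diff_divide_distrib[symmetric] abs_minus_commute)
  also have "(1 / \<sigma>) * (\<bar>r x \<beta> - r x \<beta>'\<bar> / \<sigma>) \<le> (1 / \<sigma>) * (L * norm (\<beta> - \<beta>') / \<sigma>)"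
    using lipschitz_r[OF assms] sigma_pos by (intro mult_left_mono divide_right_mono) auto
  also have "\<dots> = L * norm (\<beta> - \<beta>') / \<sigma>\<^sup>2" by (simp add: power2_eq_square)
  finally show ?thesis .
qed

lemma kernel_measurable: "kernel x y \<in> borel_measurable borel"
proof -
  have "continuous_on UNIV (r x)" using poly_r by (rule continuous_on_poly_deg_le)
  then have "continuous_on UNIV (kernel x y)"
    unfolding kernel_def std_normal_density_def using sigma_pos by (intro continuous_intros) auto
  then show ?thesis by (rule borel_measurable_continuous_onI)
qed

lemma cell_set_borel: "cell_set g \<in> sets borel"
proof -
  have [measurable]: "(\<lambda>\<beta>::real^'p. \<beta> $ i) \<in> borel_measurable borel" for i
    by (intro borel_measurable_continuous_onI continuous_intros)
  have "{\<beta>::real^'p. grid_index grid_step \<beta> = g} = (\<Inter>i. {\<beta>. \<lfloor>\<beta> $ i / grid_step\<rfloor> = g i})"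
    by (auto simp: grid_index_def fun_eq_iff)
  also have "\<dots> \<in> sets borel" by (intro sets.finite_INT) auto
  finally show ?thesis
    unfolding cell_set_def using borel_closed[OF compact_imp_closed[OF compact_K]] by auto
qed

lemma disjoint_cell_sets: "disjoint_family_on cell_set grid_cells"
  by (auto simp: disjoint_family_on_def cell_set_def)

lemma K_subset_cell_sets: "K \<subseteq> (\<Union>g\<in>grid_cells. cell_set g)"
  by (auto simp: cell_set_def grid_cells_def)

lemma norm_cell_set_grid_point_le:
  assumes "g \<in> grid_cells" "\<beta> \<in> cell_set g"
  shows "norm (\<beta> - grid_point g) \<le> \<eta> * \<sigma>\<^sup>2 / (4 * L)"
proof -
  have "grid_index grid_step \<beta> = grid_index grid_step (grid_point g)"
    using assms grid_point_spec(2)[OF assms(1)] by (simp add: cell_set_def)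
  then have "norm (\<beta> - grid_point g) \<le> real CARD('p) * grid_step"
    by (rule grid_index_eq_imp_norm_le[OF grid_step_pos])
  then show ?thesis by (simp add: grid_step_def)
qed

lemma mix_density_grid_approx:
  assumes G: "prob_space G" "sets G = sets borel" "emeasure G K = 1" and x: "x \<in> S0"
  shows "\<bar>mix_density \<sigma> r G x y - (\<Sum>g\<in>grid_cells. measure G (cell_set g) * kernel x y (grid_point g))\<bar>
           \<le> \<eta> / 4"
proof -
  have close: "\<bar>kernel x y \<beta> - kernel x y (grid_point g)\<bar> \<le> \<eta> / 4"
    if g: "g \<in> grid_cells" and \<beta>: "\<beta> \<in> cell_set g" for g \<beta>
  proof -
    have "\<bar>kernel x y \<beta> - kernel x y (grid_point g)\<bar> \<le> L * norm (\<beta> - grid_point g) / \<sigma>\<^sup>2"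
      using kernel_lipschitz[OF x _ grid_point_spec(1)[OF g]] \<beta> by (auto simp: cell_set_def)
    also have "\<dots> \<le> L * (\<eta> * \<sigma>\<^sup>2 / (4 * L)) / \<sigma>\<^sup>2"
      using norm_cell_set_grid_point_le[OF g \<beta>] L_pos by (intro divide_right_mono mult_left_mono) auto
    also have "\<dots> = \<eta> / 4" using L_pos sigma_pos by simp
    finally show ?thesis .
  qed
  have "mix_density \<sigma> r G x y = (\<integral>\<beta>. kernel x y \<beta> \<partial>G)" by (simp add: mix_density_def kernel_def)
  moreover have "\<bar>(\<integral>\<beta>. kernel x y \<beta> \<partial>G)
      - (\<Sum>g\<in>grid_cells. measure G (cell_set g) * kernel x y (grid_point g))\<bar> \<le> \<eta> / 4"
    using close cell_set_borel abs_kernel_le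
    by (intro integral_partition_approx[OF G finite_grid_cells _ disjoint_cell_sets K_subset_cell_sets
          kernel_measurable, where B = "1 / \<sigma>"]) auto
  ultimately show ?thesis by simp
qed

lemma grid_weights_sum_eq_one:
  assumes G: "prob_space G" "sets G = sets borel" "emeasure G K = 1"
  shows "(\<Sum>g\<in>grid_cells. measure G (cell_set g)) = 1"
  using cell_set_borel
  by (intro measure_partition_sum_eq_one[OF G finite_grid_cells _ disjoint_cell_sets K_subset_cell_sets]) auto

lemma kernel_local_poly_approx:
  assumes x: "x \<in> S0" and j: "j \<in> centers"
  shows "\<exists>P. poly_deg_le moment_degree P \<and>
    (\<forall>g\<in>cells_at j. \<bar>kernel x y (grid_point g) - P (grid_point g)\<bar> \<le> \<eta> / 8)"
proof -
  define v where "v \<beta> = (1 / \<sigma>) * (y + (- 1) * r x \<beta>)" for \<beta>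
  have v: "poly_deg_le \<zeta> v"
    unfolding v_def by (intro poly_deg_le_cmult poly_deg_le_add poly_deg_le_const poly_r)
  have "420 * log_scale \<le> real taylor_order" unfolding taylor_order_def by linarith
  then obtain P where P: "poly_deg_le moment_degree P"
    and approx: "\<And>\<beta>. \<bar>v \<beta> - v (anchor j)\<bar> \<le> 2 * sqrt (2 * (ln 3 + log_scale))
      \<Longrightarrow> \<bar>std_normal_density (v \<beta>) - P \<beta>\<bar> \<le> exp (- log_scale) / 8"
    using std_normal_density_local_poly_approx[OF _ v, of log_scale taylor_order "v (anchor j)"]
      log_scale_gt_one unfolding moment_degree_def by auto
  have "\<bar>kernel x y (grid_point g) - P (grid_point g) / \<sigma>\<bar> \<le> \<eta> / 8" if g: "g \<in> cells_at j" for g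
  proof -
    have gK: "grid_point g \<in> K" using g grid_point_spec(1) by (auto simp: cells_at_def)
    have aK: "anchor j \<in> K" using anchor_in_points_at[OF j] grid_point_spec(1) by (auto simp: points_at_def cells_at_def)
    have "\<bar>v (grid_point g) - v (anchor j)\<bar> = \<bar>r x (grid_point g) - r x (anchor j)\<bar> / \<sigma>"
      using sigma_pos by (simp add: v_def abs_minus_commute diff_divide_distrib[symmetric] algebra_simps)
    also have "\<dots> \<le> L * (2 * radius) / \<sigma>"
      using lipschitz_r[OF x gK aK] grid_point_near_anchor[OF j g] L_pos sigma_pos
      by (intro divide_right_mono) (auto intro: order.trans mult_left_mono)
    also have "\<dots> = 2 * sqrt (2 * (ln 3 + log_scale))"
      using L_pos sigma_pos by (simp add: radius_def ln_three_div)
    finally have "\<bar>std_normal_density (v (grid_point g)) - P (grid_point g)\<bar> \<le> \<sigma> * \<eta> / 8"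
      using approx exp_neg_log_scale by simp
    moreover have "kernel x y (grid_point g) - P (grid_point g) / \<sigma>
        = (std_normal_density (v (grid_point g)) - P (grid_point g)) / \<sigma>"
      by (simp add: kernel_def v_def diff_divide_distrib)
    ultimately show ?thesis using sigma_pos by (simp add: abs_divide divide_le_eq mult.commute)
  qed
  moreover have "poly_deg_le moment_degree (\<lambda>\<beta>. (1 / \<sigma>) * P \<beta>)" by (rule poly_deg_le_cmult[OF P])
  ultimately show ?thesis by (intro exI[of _ "\<lambda>\<beta>. (1 / \<sigma>) * P \<beta>"]) simp
qed

definition reduces :: "real^'p \<Rightarrow> (('p \<Rightarrow> int) \<Rightarrow> real) \<Rightarrow> ('p \<Rightarrow> int) set \<Rightarrow> (('p \<Rightarrow> int) \<Rightarrow> real) \<Rightarrow> bool"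
  where "reduces j w F w' \<longleftrightarrow> F \<subseteq> cells_at j \<and> card F \<le> n_moments \<and> (\<forall>g\<in>F. 0 \<le> w' g) \<and>
    (\<Sum>g\<in>F. w' g) = (\<Sum>g\<in>cells_at j. w g) \<and>
    (\<forall>x\<in>S0. \<forall>y. \<bar>(\<Sum>g\<in>cells_at j. w g * kernel x y (grid_point g)) - (\<Sum>g\<in>F. w' g * kernel x y (grid_point g))\<bar>
       \<le> \<eta> / 4 * (\<Sum>g\<in>cells_at j. w g))"

lemma cell_moment_reduction:
  assumes j: "j \<in> centers" and w: "\<forall>g\<in>cells_at j. 0 \<le> w g"
  shows "\<exists>F w'. reduces j w F w'"
proof -
  obtain F w' where F: "F \<subseteq> cells_at j" "card F \<le> n_moments" "\<forall>g\<in>F. 0 \<le> w' g"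
    and moments: "\<forall>\<alpha>\<in>multi_indices moment_degree.
      (\<Sum>g\<in>F. w' g * monomial_vec \<alpha> (grid_point g)) = (\<Sum>g\<in>cells_at j. w g * monomial_vec \<alpha> (grid_point g))"
    using nonneg_combination_reduce_support[OF finite_multi_indices finite_cells_at w,
        where V = "\<lambda>g \<alpha>. monomial_vec \<alpha> (grid_point g)"]
    unfolding n_moments_def by blast
  have error: "\<bar>(\<Sum>g\<in>cells_at j. w g * kernel x y (grid_point g)) - (\<Sum>g\<in>F. w' g * kernel x y (grid_point g))\<bar>
       \<le> \<eta> / 4 * (\<Sum>g\<in>cells_at j. w g)" if x: "x \<in> S0" for x y
  proof -
    obtain P where "poly_deg_le moment_degree P"
      "\<forall>g\<in>cells_at j. \<bar>kernel x y (grid_point g) - P (grid_point g)\<bar> \<le> \<eta> / 8"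
      using kernel_local_poly_approx[OF x j] by blast
    then show ?thesis
      using moment_matching_error(2)[OF w F(3) moments, of P "kernel x y" "\<eta> / 8"] F(1)
      by auto
  qed
  have "(\<Sum>g\<in>F. w' g) = (\<Sum>g\<in>cells_at j. w g)"
    using bspec[OF moments zero_in_multi_indices] by simp
  then show ?thesis unfolding reduces_def using F error by blast
qed

end

context mixture_net
begin

lemma atoms_enumeration:
  fixes ws :: "real^'p \<Rightarrow> ('p \<Rightarrow> int) \<Rightarrow> real"
  assumes F: "\<And>j. j \<in> centers \<Longrightarrow> F j \<subseteq> cells_at j \<and> card (F j) \<le> n_moments"
    and ws: "\<And>j g. j \<in> centers \<Longrightarrow> g \<in> F j \<Longrightarrow> 0 \<le> ws j g"
  shows "\<exists>z w. (\<forall>q\<in>atoms. z q \<in> points_at (fst q) \<and> 0 \<le> w q) \<and>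
    (\<forall>\<phi>. (\<Sum>q\<in>atoms. w q * \<phi> (z q)) = (\<Sum>j\<in>centers. \<Sum>g\<in>F j. ws j g * \<phi> (grid_point g)))"
proof -
  have "finite (F j)" if "j \<in> centers" for j
    using F[OF that] finite_cells_at finite_subset by blast
  then have "\<forall>j\<in>centers. \<exists>h. bij_betw h {0..<card (F j)} (F j)"
    using ex_bij_betw_nat_finite by blast
  then have "\<exists>en. \<forall>j\<in>centers. bij_betw (en j) {0..<card (F j)} (F j)" by (rule bchoice)
  then obtain en where en: "\<And>j. j \<in> centers \<Longrightarrow> bij_betw (en j) {0..<card (F j)} (F j)"
    by blast
  \<comment> \<open>Slot \<open>(j, i)\<close> holds the \<open>i\<close>-th atom of \<open>F j\<close>; unused slots sit at the anchor with weight \<open>0\<close>.\<close>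
  define z where "z q = (if snd q < card (F (fst q)) then grid_point (en (fst q) (snd q)) else anchor (fst q))" for q
  define w where "w q = (if snd q < card (F (fst q)) then ws (fst q) (en (fst q) (snd q)) else 0)" for q
  have "z q \<in> points_at (fst q) \<and> 0 \<le> w q" if q_atom: "q \<in> atoms" for q
  proof -
    obtain j i where q: "q = (j, i)" "j \<in> centers" using q_atom by (auto simp: atoms_def)
    show ?thesis
    proof (cases "i < card (F j)")
      case True
      then have "en j i \<in> F j" using en[OF q(2)] by (auto simp: bij_betw_def)
      then show ?thesis using True F[OF q(2)] ws[OF q(2)] by (auto simp: z_def w_def q(1) points_at_def)
    next
      case False
      then show ?thesis using anchor_in_points_at[OF q(2)] by (simp add: z_def w_def q(1))
    qed
  qed
  moreover have "(\<Sum>q\<in>atoms. w q * \<phi> (z q)) = (\<Sum>j\<in>centers. \<Sum>g\<in>F j. ws j g * \<phi> (grid_point g))" for \<phi>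
  proof -
    have "(\<Sum>q\<in>atoms. w q * \<phi> (z q)) = (\<Sum>j\<in>centers. \<Sum>i<n_moments. w (j, i) * \<phi> (z (j, i)))"
      by (simp add: atoms_def sum.cartesian_product)
    also have "\<dots> = (\<Sum>j\<in>centers. \<Sum>g\<in>F j. ws j g * \<phi> (grid_point g))"
    proof (rule sum.cong[OF refl])
      fix j assume j: "j \<in> centers"
      show "(\<Sum>i<n_moments. w (j, i) * \<phi> (z (j, i))) = (\<Sum>g\<in>F j. ws j g * \<phi> (grid_point g))"
        unfolding w_def z_def fst_conv snd_conv
        by (rule sum_padded_enumeration[OF en[OF j]]) (use F[OF j] in blast)
    qed
    finally show ?thesis .
  qed
  ultimately show ?thesis by blast
qed

lemma grid_sum_atom_approx:
  assumes w: "\<forall>g\<in>grid_cells. 0 \<le> w g" "(\<Sum>g\<in>grid_cells. w g) = 1"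
  shows "\<exists>z v. (\<forall>q\<in>atoms. z q \<in> points_at (fst q) \<and> 0 \<le> v q) \<and> (\<Sum>q\<in>atoms. v q) = 1 \<and>
    (\<forall>x\<in>S0. \<forall>y. \<bar>(\<Sum>g\<in>grid_cells. w g * kernel x y (grid_point g)) - atom_mixture z v x y\<bar> \<le> \<eta> / 4)"
proof -
  have grouped: "(\<Sum>g\<in>grid_cells. f g) = (\<Sum>j\<in>centers. \<Sum>g\<in>cells_at j. f g)" for f :: "_ \<Rightarrow> real"
    unfolding cells_at_def centers_def by (rule sum.group[symmetric]) (auto simp: finite_grid_cells)
  have "\<forall>j\<in>centers. \<exists>Fw. reduces j w (fst Fw) (snd Fw)"
  proof
    fix j assume j: "j \<in> centers"
    have "\<forall>g\<in>cells_at j. 0 \<le> w g" using w(1) by (simp add: cells_at_def)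
    then obtain F w' where "reduces j w F w'" using cell_moment_reduction[OF j] by blast
    then show "\<exists>Fw. reduces j w (fst Fw) (snd Fw)" by (intro exI[of _ "(F, w')"]) simp
  qed
  then have "\<exists>Fw. \<forall>j\<in>centers. reduces j w (fst (Fw j)) (snd (Fw j))" by (rule bchoice)
  then obtain Fw where Fw: "\<forall>j\<in>centers. reduces j w (fst (Fw j)) (snd (Fw j))" by blast
  define F where "F j = fst (Fw j)" for j
  define w' where "w' j = snd (Fw j)" for j
  have red: "\<And>j. j \<in> centers \<Longrightarrow> reduces j w (F j) (w' j)" using Fw by (simp add: F_def w'_def)
  have "F j \<subseteq> cells_at j \<and> card (F j) \<le> n_moments" "\<forall>g\<in>F j. 0 \<le> w' j g" if "j \<in> centers" for j
    using red[OF that] by (simp_all add: reduces_def)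
  then obtain z v where zv: "\<forall>q\<in>atoms. z q \<in> points_at (fst q) \<and> 0 \<le> v q"
    and sums: "\<And>\<phi>. (\<Sum>q\<in>atoms. v q * \<phi> (z q)) = (\<Sum>j\<in>centers. \<Sum>g\<in>F j. w' j g * \<phi> (grid_point g))"
    using atoms_enumeration[of F w'] by blast
  have "(\<Sum>q\<in>atoms. v q) = (\<Sum>j\<in>centers. \<Sum>g\<in>F j. w' j g)"
    using sums[of "\<lambda>_. 1"] by simp
  also have "\<dots> = (\<Sum>j\<in>centers. \<Sum>g\<in>cells_at j. w g)"
    using red unfolding reduces_def by (intro sum.cong[OF refl]) blast
  finally have "(\<Sum>q\<in>atoms. v q) = 1" using w(2) by (simp add: grouped)
  moreover have "\<bar>(\<Sum>g\<in>grid_cells. w g * kernel x y (grid_point g)) - atom_mixture z v x y\<bar> \<le> \<eta> / 4"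
    if x: "x \<in> S0" for x y
  proof -
    have "\<bar>(\<Sum>g\<in>grid_cells. w g * kernel x y (grid_point g)) - atom_mixture z v x y\<bar>
        \<le> (\<Sum>j\<in>centers. \<bar>(\<Sum>g\<in>cells_at j. w g * kernel x y (grid_point g))
             - (\<Sum>g\<in>F j. w' j g * kernel x y (grid_point g))\<bar>)"
      unfolding atom_mixture_def sums grouped sum_subtractf[symmetric] by (rule sum_abs)
    also have "\<dots> \<le> (\<Sum>j\<in>centers. \<eta> / 4 * (\<Sum>g\<in>cells_at j. w g))"
      using red x unfolding reduces_def by (intro sum_mono) blast
    also have "\<dots> = \<eta> / 4 * (\<Sum>j\<in>centers. \<Sum>g\<in>cells_at j. w g)"
      by (rule sum_distrib_left[symmetric])
    also have "\<dots> = \<eta> / 4" using w(2) by (simp add: grouped)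
    finally show ?thesis .
  qed
  ultimately show ?thesis using zv by blast
qed

lemma atom_mixture_quantize:
  assumes zv: "\<forall>q\<in>atoms. z q \<in> points_at (fst q) \<and> 0 \<le> v q" and v: "(\<Sum>q\<in>atoms. v q) = 1"
  shows "\<exists>z'\<in>atom_locations. \<exists>\<kappa>\<in>atom_counts. \<forall>x y.
    \<bar>atom_mixture z v x y - atom_mixture z' (\<lambda>q. quantum * real (\<kappa> q)) x y\<bar> \<le> \<eta> / 4"
proof -
  define \<kappa> where "\<kappa> = restrict (\<lambda>q. nat \<lfloor>v q / quantum\<rfloor>) atoms"
  have \<kappa>: "real (\<kappa> q) \<le> v q / quantum" "0 \<le> v q - quantum * real (\<kappa> q)"
    "v q - quantum * real (\<kappa> q) \<le> quantum" if "q \<in> atoms" for q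
    using floor_quantization[of "v q" quantum] bspec[OF zv that] that quantum_pos by (simp_all add: \<kappa>_def)
  have "real (\<Sum>q\<in>atoms. \<kappa> q) \<le> (\<Sum>q\<in>atoms. v q / quantum)"
    unfolding of_nat_sum by (intro sum_mono \<kappa>(1))
  also have "\<dots> = 1 / quantum" using v by (simp add: sum_divide_distrib[symmetric])
  finally have sum_le: "(\<Sum>q\<in>atoms. \<kappa> q) \<le> n_quanta" unfolding n_quanta_def by (rule le_nat_floor)
  moreover have "\<kappa> q \<le> n_quanta" if "q \<in> atoms" for q
    using member_le_sum[of q atoms \<kappa>] that finite_atoms sum_le by simp
  ultimately have "\<kappa> \<in> atom_counts" by (auto simp: atom_counts_def \<kappa>_def)
  moreover have "restrict z atoms \<in> atom_locations" using zv by (auto simp: atom_locations_def)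
  moreover have "\<bar>atom_mixture z v x y - atom_mixture (restrict z atoms) (\<lambda>q. quantum * real (\<kappa> q)) x y\<bar>
      \<le> \<eta> / 4" for x y
  proof -
    have "\<bar>atom_mixture z v x y - atom_mixture (restrict z atoms) (\<lambda>q. quantum * real (\<kappa> q)) x y\<bar>
        = \<bar>\<Sum>q\<in>atoms. (v q - quantum * real (\<kappa> q)) * kernel x y (z q)\<bar>"
      by (simp add: atom_mixture_def sum_subtractf left_diff_distrib)
    also have "\<dots> \<le> (1 / \<sigma>) * (\<Sum>q\<in>atoms. v q - quantum * real (\<kappa> q))"
      using \<kappa>(2) abs_kernel_le by (intro abs_weighted_sum_le) auto
    also have "\<dots> \<le> (1 / \<sigma>) * (\<Sum>q\<in>atoms. quantum)"
      using \<kappa>(3) sigma_pos by (intro mult_left_mono sum_mono) auto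
    also have "\<dots> = \<eta> / 4" using card_atoms_pos sigma_pos by (simp add: quantum_def)
    finally show ?thesis .
  qed
  ultimately show ?thesis by blast
qed

lemma mixture_class_near_net:
  assumes "f \<in> mixture_class \<sigma> r K"
  shows "\<exists>s\<in>net. sup_dist S0 s f \<le> ereal \<eta>"
proof -
  obtain G where f: "f = mix_density \<sigma> r G" and G: "prob_space G" "sets G = sets borel" "emeasure G K = 1"
    using assms by (auto simp: mixture_class_def)
  obtain z v where zv: "\<forall>q\<in>atoms. z q \<in> points_at (fst q) \<and> 0 \<le> v q" "(\<Sum>q\<in>atoms. v q) = 1"
    and atomic: "\<forall>x\<in>S0. \<forall>y. \<bar>(\<Sum>g\<in>grid_cells. measure G (cell_set g) * kernel x y (grid_point g))
      - atom_mixture z v x y\<bar> \<le> \<eta> / 4"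
    using grid_sum_atom_approx[OF _ grid_weights_sum_eq_one[OF G]] by auto
  obtain z' \<kappa> where z'\<kappa>: "z' \<in> atom_locations" "\<kappa> \<in> atom_counts"
    and quantized: "\<And>x y. \<bar>atom_mixture z v x y - atom_mixture z' (\<lambda>q. quantum * real (\<kappa> q)) x y\<bar> \<le> \<eta> / 4"
    using atom_mixture_quantize[OF zv] by blast
  define s where "s = atom_mixture z' (\<lambda>q. quantum * real (\<kappa> q))"
  have "\<bar>f x y - s x y\<bar> \<le> \<eta>" if "x \<in> S0" for x y
  proof -
    have "\<bar>f x y - s x y\<bar> \<le> \<eta> / 4 + \<eta> / 4 + \<eta> / 4"
      using mix_density_grid_approx[OF G that, of y] atomic[rule_format, OF that, of y] quantized[of x y]
      unfolding f s_def by linarith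
    then show ?thesis using eta_pos by linarith
  qed
  then have "sup_dist S0 s f \<le> ereal \<eta>"
    unfolding sup_dist_def by (intro SUP_least) (auto simp: abs_minus_commute)
  moreover have "s \<in> net" using z'\<kappa> unfolding net_def s_def by force
  ultimately show ?thesis by blast
qed

end

context mixture_net
begin

lemma finite_atom_locations: "finite atom_locations"
  unfolding atom_locations_def points_at_def
  by (intro finite_PiE finite_atoms finite_imageI finite_cells_at)

lemma finite_atom_counts: "finite atom_counts"
  unfolding atom_counts_def
  by (rule finite_subset[of _ "Pi\<^sub>E atoms (\<lambda>_. {..n_quanta})"]) (auto intro: finite_PiE finite_atoms)

lemma card_atom_locations_pos: "0 < card atom_locations"
proof -
  have "\<forall>q\<in>atoms. points_at (fst q) \<noteq> {}"
    using cells_at_nonempty by (auto simp: atoms_def points_at_def)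
  then show ?thesis
    using finite_atom_locations by (simp add: card_gt_0_iff atom_locations_def PiE_eq_empty_iff)
qed

lemma card_atom_counts_pos: "0 < card atom_counts"
proof -
  have "(\<lambda>q\<in>atoms. 0) \<in> atom_counts" by (auto simp: atom_counts_def)
  then show ?thesis using finite_atom_counts by (auto simp: card_gt_0_iff)
qed

lemma sqrt_ln_three_div_le: "sqrt (2 * ln (3 / (\<sigma> * \<eta>))) \<le> 3 * log_scale"
proof -
  have T: "1 \<le> log_scale" using log_scale_gt_one by simp
  have "2 * ln (3 / (\<sigma> * \<eta>)) = 2 * ln 3 + 2 * log_scale" by (simp add: ln_three_div)
  also have "\<dots> \<le> 4 + 2 * log_scale" using ln_le_minus_one[of 3] by simp
  also have "\<dots> \<le> 9 * (1 * log_scale)" using T by simp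
  also have "\<dots> \<le> 9 * (log_scale * log_scale)" using T by (intro mult_left_mono mult_right_mono) auto
  also have "\<dots> = (3 * log_scale)\<^sup>2" by (simp add: power2_eq_square)
  finally show ?thesis using T by (intro real_le_lsqrt) auto
qed

lemma ln_grid_ratio_le:
  "ln (2 * radius / grid_step + 2) \<le> (ln (26 * real CARD('p)) + 2) * log_scale"
proof -
  define p where "p = real CARD('p)"
  define T where "T = log_scale"
  have p: "1 \<le> p" and T: "1 \<le> T" using log_scale_gt_one by (simp_all add: p_def T_def)
  have eT: "T \<le> exp T" "1 \<le> exp T" using exp_ge_add_one_self[of T] T by linarith+
  have "2 * radius / grid_step = 8 * p * sqrt (2 * ln (3 / (\<sigma> * \<eta>))) * (1 / (\<sigma> * \<eta>))"
    using sigma_pos eta_pos L_pos by (simp add: radius_def grid_step_def p_def field_simps power2_eq_square)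
  also have "\<dots> \<le> 8 * p * (3 * T) * exp T"
    using sqrt_ln_three_div_le p unfolding exp_log_scale[symmetric] T_def
    by (intro mult_right_mono mult_left_mono) auto
  also have "\<dots> = 24 * (p * T * exp T)" by simp
  finally have ratio: "2 * radius / grid_step \<le> 24 * (p * T * exp T)" .
  have "1 \<le> p * T * exp T"
    using mult_mono[OF mult_mono[OF p T] eT(2)] p T by simp
  then have "2 * radius / grid_step + 2 \<le> 26 * (p * T * exp T)" using ratio by linarith
  also have "\<dots> \<le> 26 * p * exp T * exp T"
  proof -
    have "p * T \<le> p * exp T" using eT(1) p by (intro mult_left_mono) auto
    then have "p * T * exp T \<le> p * exp T * exp T" by (intro mult_right_mono) auto
    then show ?thesis by simp
  qed
  finally have "ln (2 * radius / grid_step + 2) \<le> ln (26 * p * exp T * exp T)"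
    using radius_pos grid_step_pos p by (subst ln_le_cancel_iff) (auto intro: add_pos_pos)
  also have "\<dots> = ln (26 * p) + 2 * T" using p by (simp add: ln_mult)
  also have "\<dots> \<le> (ln (26 * p) + 2) * T"
    using T mult_left_mono[of 1 T "ln (26 * p)"] p by (simp add: distrib_right)
  finally show ?thesis by (simp add: p_def T_def)
qed

lemma ln_card_atom_locations_le:
  "ln (real (card atom_locations))
     \<le> real (card atoms) * real CARD('p) * ((ln (26 * real CARD('p)) + 2) * log_scale)"
proof -
  define Q where "Q = 2 * radius / grid_step + 2"
  have Q: "1 \<le> Q" using radius_pos grid_step_pos by (simp add: Q_def)
  have "real (card atom_locations) = (\<Prod>q\<in>atoms. real (card (points_at (fst q))))"
    by (simp add: atom_locations_def card_PiE[OF finite_atoms])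
  also have "\<dots> \<le> (\<Prod>q\<in>atoms. Q ^ CARD('p))"
  proof (rule prod_mono)
    fix q assume "q \<in> atoms"
    then have "real (card (points_at (fst q))) \<le> real (card (cells_at (fst q)))"
      "real (card (cells_at (fst q))) \<le> Q ^ CARD('p)"
      using card_image_le[OF finite_cells_at] card_cells_at_le
      by (auto simp: points_at_def atoms_def Q_def)
    then show "0 \<le> real (card (points_at (fst q))) \<and> real (card (points_at (fst q))) \<le> Q ^ CARD('p)"
      by linarith
  qed
  also have "\<dots> = Q ^ (CARD('p) * card atoms)" by (simp add: power_mult)
  finally have "ln (real (card atom_locations)) \<le> ln (Q ^ (CARD('p) * card atoms))"
    using card_atom_locations_pos by (subst ln_le_cancel_iff) auto
  also have "\<dots> = real (card atoms) * real CARD('p) * ln Q" using Q by (simp add: ln_realpow)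
  also have "\<dots> \<le> real (card atoms) * real CARD('p) * ((ln (26 * real CARD('p)) + 2) * log_scale)"
    using ln_grid_ratio_le by (intro mult_left_mono) (auto simp: Q_def)
  finally show ?thesis .
qed

lemma ln_card_atom_counts_le: "ln (real (card atom_counts)) \<le> real (card atoms) * (6 * log_scale)"
proof -
  define N where "N = real (card atoms)"
  have N: "1 \<le> N" using card_atoms_pos by (simp add: N_def)
  have "real n_quanta \<le> 1 / quantum" unfolding n_quanta_def using quantum_pos by simp
  then have "real n_quanta / N \<le> 4 * exp log_scale"
    using N sigma_eta_pos by (simp add: quantum_def exp_log_scale N_def field_simps)
  moreover have "1 \<le> exp log_scale" using log_scale_gt_one by simp
  ultimately have "1 + real n_quanta / N \<le> 5 * exp log_scale" by linarith
  then have "ln (1 + real n_quanta / N) \<le> ln (5 * exp log_scale)"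
    using N by (subst ln_le_cancel_iff) (auto intro: add_pos_nonneg)
  also have "\<dots> = ln 5 + log_scale" by (simp add: ln_mult)
  finally have "1 + ln (1 + real n_quanta / N) \<le> 6 * log_scale"
    using ln_le_minus_one[of 5] log_scale_gt_one by simp
  then have "N * (1 + ln (1 + real n_quanta / N)) \<le> N * (6 * log_scale)"
    using N by (intro mult_left_mono) auto
  then show ?thesis
    using ln_card_bounded_sum_vectors_le[OF finite_atoms refl card_atoms_pos, of n_quanta]
    unfolding atom_counts_def N_def by linarith
qed

lemma card_atoms_le: "real (card atoms) \<le> real (card S) * (843 * real \<zeta> * log_scale) ^ CARD('p)"
proof -
  have T: "1 \<le> log_scale" and z: "1 \<le> real \<zeta>" using log_scale_gt_one zeta_pos by simp_all
  have "real taylor_order \<le> 421 * log_scale" unfolding taylor_order_def using T by linarith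
  then have "real taylor_order * real \<zeta> \<le> (421 * log_scale) * real \<zeta>"
    by (rule mult_right_mono) simp
  also have "\<dots> = 421 * (real \<zeta> * log_scale)" by simp
  finally have "real taylor_order * real \<zeta> \<le> 421 * (real \<zeta> * log_scale)" .
  moreover have "1 \<le> real \<zeta> * log_scale" using mult_mono[OF z T] by simp
  moreover have "real (moment_degree + 1) = 2 * (real taylor_order * real \<zeta>) + 1"
    by (simp add: moment_degree_def)
  ultimately have "real (moment_degree + 1) \<le> 843 * (real \<zeta> * log_scale)" by linarith
  then have "real (moment_degree + 1) ^ CARD('p) \<le> (843 * real \<zeta> * log_scale) ^ CARD('p)"
    by (intro power_mono) (simp_all add: mult.assoc)
  moreover have "real n_moments \<le> real (moment_degree + 1) ^ CARD('p)"
    using card_multi_indices_le[of moment_degree, where 'p='p] unfolding n_moments_def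
    by (simp only: of_nat_le_iff of_nat_power[symmetric])
  ultimately have "real n_moments \<le> (843 * real \<zeta> * log_scale) ^ CARD('p)" by linarith
  then show ?thesis
    using card_centers_le by (simp add: card_atoms mult_mono)
qed

lemma ln_card_net_le:
  "ln (real (card net)) \<le> cover_const CARD('p) * real \<zeta> ^ CARD('p) * real (card S) * log_scale ^ (CARD('p) + 1)"
proof -
  define p where "p = real CARD('p)"
  have c: "0 \<le> p * (ln (26 * p) + 2) + 6" unfolding p_def by (rule cover_const_factor_nonneg)
  have "card net \<le> card (atom_locations \<times> atom_counts)"
    unfolding net_def by (rule card_image_le) (simp add: finite_atom_locations finite_atom_counts)
  then have card_le: "real (card net) \<le> real (card atom_locations) * real (card atom_counts)"
    by (simp add: card_cartesian_product flip: of_nat_mult)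
  have "ln (real (card net)) \<le> ln (real (card atom_locations) * real (card atom_counts))"
  proof (cases "card net = 0")
    case False
    then show ?thesis using card_le by (subst ln_le_cancel_iff) auto
  next
    case True
    have "1 * 1 \<le> real (card atom_locations) * real (card atom_counts)"
      using card_atom_locations_pos card_atom_counts_pos by (intro mult_mono) auto
    then show ?thesis using True by simp
  qed
  also have "\<dots> = ln (real (card atom_locations)) + ln (real (card atom_counts))"
    using card_atom_locations_pos card_atom_counts_pos by (simp add: ln_mult)
  also have "\<dots> \<le> real (card atoms) * log_scale * (p * (ln (26 * p) + 2) + 6)"
    using ln_card_atom_locations_le ln_card_atom_counts_le by (simp add: p_def algebra_simps)
  also have "\<dots> \<le> (real (card S) * (843 * real \<zeta> * log_scale) ^ CARD('p)) * log_scale * (p * (ln (26 * p) + 2) + 6)"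
    using card_atoms_le log_scale_gt_one c by (intro mult_right_mono) auto
  finally show ?thesis by (simp add: cover_const_def p_def power_mult_distrib algebra_simps)
qed

lemma covering_number_bound_by_cover:
  "covering_number (sup_dist S0) \<eta> (mixture_class \<sigma> r K) < \<infinity> \<and>
   ln (real_of_ereal (covering_number (sup_dist S0) \<eta> (mixture_class \<sigma> r K)))
     \<le> cover_const CARD('p) * real \<zeta> ^ CARD('p) * real (card S) * log_scale ^ (CARD('p) + 1)"
proof -
  define N where "N = covering_number (sup_dist S0) \<eta> (mixture_class \<sigma> r K)"
  have "N \<le> ereal (real (card net))"
    unfolding N_def using mixture_class_near_net
    by (intro covering_number_le_card) (auto simp: net_def finite_atom_locations finite_atom_counts)
  moreover have "0 \<le> N" unfolding N_def by (rule covering_number_nonneg)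
  ultimately obtain n where n: "N = ereal n" "0 \<le> n" "n \<le> real (card net)" by (cases N) auto
  have "0 \<le> cover_const CARD('p) * real \<zeta> ^ CARD('p) * real (card S) * log_scale ^ (CARD('p) + 1)"
    using log_scale_gt_one cover_const_nonneg by simp
  moreover have "ln n \<le> ln (real (card net))" if "0 < n" using that n by simp
  ultimately have "ln n \<le> cover_const CARD('p) * real \<zeta> ^ CARD('p) * real (card S) * log_scale ^ (CARD('p) + 1)"
    using ln_card_net_le n(2) by (cases "n = 0") auto
  then show ?thesis using n by (simp add: N_def[symmetric])
qed

end

lemma covering_number_mixture_class_bound:
  fixes K :: "(real^'p) set" and S0 :: "'x set" and r :: "'x \<Rightarrow> real^'p \<Rightarrow> real"
  assumes K: "compact K" and \<sigma>: "\<sigma> > 0" and \<zeta>: "\<zeta> \<ge> 1" and poly: "\<forall>x. poly_deg_le \<zeta> (r x)"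
    and L_pos: "0 < (SUP x \<in> S0. lip_const r K x)" and L_fin: "(SUP x \<in> S0. lip_const r K x) < \<infinity>"
    and \<eta>: "0 < \<eta>" and \<eta>_small: "\<eta> < exp (-1) / \<sigma>"
  shows "covering_number (sup_dist S0) \<eta> (mixture_class \<sigma> r K) < \<infinity> \<and>
    ln (real_of_ereal (covering_number (sup_dist S0) \<eta> (mixture_class \<sigma> r K)))
    \<le> cover_const CARD('p) * real \<zeta> ^ CARD('p)
      * real_of_ereal (covering_number (\<lambda>a b. ereal (dist a b))
          (\<sigma> / real_of_ereal (SUP x \<in> S0. lip_const r K x) * sqrt (2 * ln (3 / (\<sigma> * \<eta>)))) K)
      * (ln (1 / (\<sigma> * \<eta>))) ^ (CARD('p) + 1)"
proof -
  obtain L where L: "(SUP x \<in> S0. lip_const r K x) = ereal L" "0 < L"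
    using L_pos L_fin by (cases "SUP x \<in> S0. lip_const r K x") auto
  have \<sigma>\<eta>: "\<sigma> * \<eta> < exp (-1)" using \<eta>_small \<sigma> by (simp add: less_divide_eq mult.commute)
  moreover have "exp (-1::real) \<le> 1" by simp
  ultimately have "\<sigma> * \<eta> < 3" by linarith
  then have "1 < 3 / (\<sigma> * \<eta>)" using \<sigma> \<eta> by (simp add: less_divide_eq)
  then have "0 < ln (3 / (\<sigma> * \<eta>))" by (rule ln_gt_zero)
  then have \<rho>_pos: "0 < \<sigma> / L * sqrt (2 * ln (3 / (\<sigma> * \<eta>)))" using \<sigma> L(2) by simp
  obtain S where S: "finite S" "\<forall>t\<in>K. \<exists>s\<in>S. dist s t \<le> \<sigma> / L * sqrt (2 * ln (3 / (\<sigma> * \<eta>)))"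
    and card_S: "covering_number (\<lambda>a b. ereal (dist a b)) (\<sigma> / L * sqrt (2 * ln (3 / (\<sigma> * \<eta>)))) K
      = ereal (real (card S))"
    using covering_number_attained[OF K \<rho>_pos] by blast
  interpret mixture_net K S0 \<sigma> \<eta> L r \<zeta> S
    using K nonempty_of_SUP_lip_const_pos[OF L_pos] \<sigma> \<eta> \<sigma>\<eta> L(2) poly \<zeta>
      lipschitz_of_SUP_lip_const[OF L(1)] S
    by unfold_locales auto
  show ?thesis
    using covering_number_bound_by_cover
    unfolding L(1) real_of_ereal.simps(1) card_S log_scale_def by simp
qed

theorem theorem6p3:
  "\<exists>C::real. \<forall>(K :: (real^'p) set) (S0 :: 'x set) (\<sigma>::real) (r :: 'x \<Rightarrow> real^'p \<Rightarrow> real) (\<zeta>::nat) (\<eta>::real).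
     compact K \<and> \<sigma> > 0 \<and> \<zeta> \<ge> 1 \<and> (\<forall>x. poly_deg_le \<zeta> (r x)) \<and>
     0 < (SUP x \<in> S0. lip_const r K x) \<and> (SUP x \<in> S0. lip_const r K x) < \<infinity> \<and>
     0 < \<eta> \<and> \<eta> < exp (-1) / \<sigma>
     \<longrightarrow> covering_number (sup_dist S0) \<eta> (mixture_class \<sigma> r K) < \<infinity> \<and>
         ln (real_of_ereal (covering_number (sup_dist S0) \<eta> (mixture_class \<sigma> r K)))
         \<le> C * real \<zeta> ^ CARD('p)
             * real_of_ereal (covering_number (\<lambda>a b. ereal (dist a b))
                 (\<sigma> / real_of_ereal (SUP x \<in> S0. lip_const r K x) * sqrt (2 * ln (3 / (\<sigma> * \<eta>)))) K)
             * (ln (1 / (\<sigma> * \<eta>))) ^ (CARD('p) + 1)"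
  by (intro exI[of _ "cover_const CARD('p)"] allI impI, elim conjE)
    (rule covering_number_mixture_class_bound)

end
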